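(* For $n\ge 2$, the group $TVH_n$ is generated by the elements $x_{kl}$ ($1\le k\ne l\le n$) and $\gamma_j$ ($1\le j\le n$), and a complete set of defining relations in these generators is: $x_{ij}x_{kl}=x_{kl}x_{ij}$ for pairwise distinct $i,j,k,l$; $x_{ik}x_{kj}x_{ik}=x_{kj}x_{ik}x_{kj}$ for pairwise distinct $i,j,k$; $\gamma_i^2=1$; $\gamma_i\gamma_j=\gamma_j\gamma_i$ for $i\ne j$; $x_{ij}\gamma_k=\gamma_k x_{ij}$ for pairwise distinct $i,j,k$; $x_{ij}=\gamma_i\gamma_j x_{ji}\gamma_j\gamma_i$ for $i\ne j$.
   Context: For $n\ge 2$, the twisted virtual braid group $TVB_n$ is the group with generators $\sigma_1,\dots,\sigma_{n-1}$, $\rho_1,\dots,\rho_{n-1}$, $\gamma_1,\dots,\gamma_n$ and defining relations: $\sigma_i\sigma_{i+1}\sigma_i=\sigma_{i+1}\sigma_i\sigma_{i+1}$ ($1\le i\le n-2$); $\sigma_i\sigma_j=\sigma_j\sigma_i$ ($|i-j|\ge 2$); $\rho_i^2=1$; $\rho_i\rho_j=\rho_j\rho_i$ ($|i-j|\ge2$); $\rho_i\rho_{i+1}\rho_i=\rho_{i+1}\rho_i\rho_{i+1}$ ($1\le i\le n-2$); $\sigma_i\rho_j=\rho_j\sigma_i$ ($|i-j|\ge 2$); $\rho_i\rho_{i+1}\sigma_i=\sigma_{i+1}\rho_i\rho_{i+1}$ ($1\le i\le n-2$); $\gamma_i^2=1$ and $\gamma_i\gamma_j=\gamma_j\gamma_i$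 (all $i,j$); $\gamma_j\rho_i=\rho_i\gamma_j$ and $\gamma_j\sigma_i=\sigma_i\gamma_j$ for $j\notin\{i,i+1\}$; $\rho_i\gamma_i=\gamma_{i+1}\rho_i$ ($1\le i\le n-1$); $\rho_i\sigma_i\rho_i=\gamma_{i+1}\gamma_i\sigma_i\gamma_i\gamma_{i+1}$ ($1\le i\le n-1$). $\varphi_H:TVB_n\to S_n$ is the homomorphism with $\sigma_i\mapsto e$, $\rho_i\mapsto(i,i+1)$, $\gamma_j\mapsto e$, and $TVH_n=\ker\varphi_H$. In $TVB_n$ define $x_{i,i+1}=\sigma_i$, $x_{i+1,i}=\rho_i\sigma_i\rho_i$ ($1\le i\le n-1$), and for $1\le i<j-1\le n-1$: $x_{ij}=\rho_{j-1}\cdots\rho_{i+1}\sigma_i\rho_{i+1}\cdots\rho_{j-1}$, $x_{ji}=\rho_{j-1}\cdots\rho_{i+1}\rho_i\sigma_i\rho_i\rho_{i+1}\cdots\rho_{j-1}$. *)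

theory Defs
  imports "HOL-Combinatorics.Transposition"
begin

text \<open>A word over an alphabet 'a is a list of signed letters; (a, True) is the
generator a, (a, False) its formal inverse.\<close>

type_synonym 'a word = "('a \<times> bool) list"

definition inv_word :: "'a word \<Rightarrow> 'a word" where
  "inv_word w = rev (map (\<lambda>(a, b). (a, \<not> b)) w)"

text \<open>Equality in the group presented by the relations R (a set of pairs (l, r)
meaning the relation l = r): the congruence on words generated by free
cancellation and the relations.\<close>

inductive pres_eq :: "('a word \<times> 'a word) set \<Rightarrow> 'a word \<Rightarrow> 'a word \<Rightarrow> bool"
  for R where
  refl: "pres_eq R w w"
| sym: "pres_eq R u w \<Longrightarrow> pres_eq R w u"
| trans: "pres_eq R u v \<Longrightarrow> pres_eq R v w \<Longrightarrow> pres_eq R u w"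
| cancel: "pres_eq R (u @ [(a, b), (a, \<not> b)] @ v) (u @ v)"
| rel: "(l, r) \<in> R \<Longrightarrow> pres_eq R (u @ l @ v) (u @ r @ v)"

datatype tvb_gen = Sig nat | Rho nat | Gam nat

definition tvb_valid_gen :: "nat \<Rightarrow> tvb_gen \<Rightarrow> bool" where
  "tvb_valid_gen n g = (case g of
      Sig i \<Rightarrow> 1 \<le> i \<and> i \<le> n - 1
    | Rho i \<Rightarrow> 1 \<le> i \<and> i \<le> n - 1
    | Gam j \<Rightarrow> 1 \<le> j \<and> j \<le> n)"

definition valid_tvb :: "nat \<Rightarrow> tvb_gen word \<Rightarrow> bool" where
  "valid_tvb n w = (\<forall>(g, b) \<in> set w. tvb_valid_gen n g)"

abbreviation s :: "nat \<Rightarrow> tvb_gen \<times> bool" where "s i \<equiv> (Sig i, True)"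
abbreviation r :: "nat \<Rightarrow> tvb_gen \<times> bool" where "r i \<equiv> (Rho i, True)"
abbreviation g :: "nat \<Rightarrow> tvb_gen \<times> bool" where "g i \<equiv> (Gam i, True)"

text \<open>Defining relations of TVB_n (indices 1-based as in the paper).\<close>

definition tvb_rels :: "nat \<Rightarrow> (tvb_gen word \<times> tvb_gen word) set" where
  "tvb_rels n =
     {([s i, s (i+1), s i], [s (i+1), s i, s (i+1)]) | i. 1 \<le> i \<and> i \<le> n - 2}
   \<union> {([s i, s j], [s j, s i]) | i j. 1 \<le> i \<and> i \<le> n - 1 \<and> 1 \<le> j \<and> j \<le> n - 1
        \<and> (i + 2 \<le> j \<or> j + 2 \<le> i)}
   \<union> {([r i, r i], []) | i. 1 \<le> i \<and> i \<le> n - 1}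
   \<union> {([r i, r j], [r j, r i]) | i j. 1 \<le> i \<and> i \<le> n - 1 \<and> 1 \<le> j \<and> j \<le> n - 1
        \<and> (i + 2 \<le> j \<or> j + 2 \<le> i)}
   \<union> {([r i, r (i+1), r i], [r (i+1), r i, r (i+1)]) | i. 1 \<le> i \<and> i \<le> n - 2}
   \<union> {([s i, r j], [r j, s i]) | i j. 1 \<le> i \<and> i \<le> n - 1 \<and> 1 \<le> j \<and> j \<le> n - 1
        \<and> (i + 2 \<le> j \<or> j + 2 \<le> i)}
   \<union> {([r i, r (i+1), s i], [s (i+1), r i, r (i+1)]) | i. 1 \<le> i \<and> i \<le> n - 2}
   \<union> {([g i, g i], []) | i. 1 \<le> i \<and> i \<le> n}
   \<union> {([g i, g j], [g j, g i]) | i j. 1 \<le> i \<and> i \<le> n \<and> 1 \<le> j \<and> j \<le> n}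
   \<union> {([g j, r i], [r i, g j]) | i j. 1 \<le> i \<and> i \<le> n - 1 \<and> 1 \<le> j \<and> j \<le> n
        \<and> j \<noteq> i \<and> j \<noteq> i + 1}
   \<union> {([g j, s i], [s i, g j]) | i j. 1 \<le> i \<and> i \<le> n - 1 \<and> 1 \<le> j \<and> j \<le> n
        \<and> j \<noteq> i \<and> j \<noteq> i + 1}
   \<union> {([r i, g i], [g (i+1), r i]) | i. 1 \<le> i \<and> i \<le> n - 1}
   \<union> {([r i, s i, r i], [g (i+1), g i, s i, g i, g (i+1)]) | i. 1 \<le> i \<and> i \<le> n - 1}"

definition letter_perm :: "tvb_gen \<Rightarrow> nat \<Rightarrow> nat" where
  "letter_perm x = (case x of Sig i \<Rightarrow> id | Rho i \<Rightarrow> transpose i (i+1) | Gam j \<Rightarrow> id)"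

text \<open>Image under phi_H of (the element represented by) a word, as a permutation
of the natural numbers (moving only points of {1..n} for valid words).\<close>

definition phiH :: "tvb_gen word \<Rightarrow> nat \<Rightarrow> nat" where
  "phiH w = foldr (\<lambda>(x, b) f. (if b then letter_perm x else inv (letter_perm x)) \<circ> f) w id"

definition rhos :: "nat \<Rightarrow> nat \<Rightarrow> tvb_gen word" where
  "rhos a b = map (\<lambda>k. r k) [a..<Suc b]"

definition xword :: "nat \<Rightarrow> nat \<Rightarrow> tvb_gen word" where
  "xword k l =
     (if l = k + 1 then [s k]
      else if k = l + 1 then [r l, s l, r l]
      else if k < l then rev (rhos (k+1) (l-1)) @ [s k] @ rhos (k+1) (l-1)
      else rev (rhos l (k-1)) @ [s l] @ rhos l (k-1))"

datatype tvh_gen = X nat nat | G nat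

definition tvh_valid_gen :: "nat \<Rightarrow> tvh_gen \<Rightarrow> bool" where
  "tvh_valid_gen n y = (case y of
      X k l \<Rightarrow> 1 \<le> k \<and> k \<le> n \<and> 1 \<le> l \<and> l \<le> n \<and> k \<noteq> l
    | G j \<Rightarrow> 1 \<le> j \<and> j \<le> n)"

definition valid_tvh :: "nat \<Rightarrow> tvh_gen word \<Rightarrow> bool" where
  "valid_tvh n v = (\<forall>(y, b) \<in> set v. tvh_valid_gen n y)"

definition tvh_img :: "tvh_gen \<Rightarrow> tvb_gen word" where
  "tvh_img y = (case y of X k l \<Rightarrow> xword k l | G j \<Rightarrow> [g j])"

definition subst :: "tvh_gen word \<Rightarrow> tvb_gen word" where
  "subst v = concat (map (\<lambda>(y, b). if b then tvh_img y else inv_word (tvh_img y)) v)"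

abbreviation xx :: "nat \<Rightarrow> nat \<Rightarrow> tvh_gen \<times> bool" where "xx i j \<equiv> (X i j, True)"
abbreviation gg :: "nat \<Rightarrow> tvh_gen \<times> bool" where "gg i \<equiv> (G i, True)"

definition inrange :: "nat \<Rightarrow> nat \<Rightarrow> bool" where
  "inrange n i = (1 \<le> i \<and> i \<le> n)"

definition tvh_rels :: "nat \<Rightarrow> (tvh_gen word \<times> tvh_gen word) set" where
  "tvh_rels n =
     {([xx i j, xx k l], [xx k l, xx i j]) | i j k l.
        inrange n i \<and> inrange n j \<and> inrange n k \<and> inrange n l
        \<and> distinct [i, j, k, l]}
   \<union> {([xx i k, xx k j, xx i k], [xx k j, xx i k, xx k j]) | i j k.
        inrange n i \<and> inrange n j \<and> inrange n k \<and> distinct [i, j, k]}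
   \<union> {([gg i, gg i], []) | i. inrange n i}
   \<union> {([gg i, gg j], [gg j, gg i]) | i j. inrange n i \<and> inrange n j \<and> i \<noteq> j}
   \<union> {([xx i j, gg k], [gg k, xx i j]) | i j k.
        inrange n i \<and> inrange n j \<and> inrange n k \<and> distinct [i, j, k]}
   \<union> {([xx i j], [gg i, gg j, xx j i, gg j, gg i]) | i j.
        inrange n i \<and> inrange n j \<and> i \<noteq> j}"

end

theory Submission
  imports Defs
begin

text \<open>TVH_n is the kernel of the map TVB_n \<rightarrow> S_n killing the sigma_i and gamma_j, so the
words in the rho_i form a transversal and the Reidemeister--Schreier method applies.
Reading a word letter by letter while tracking phi_H of the prefix rewrites it into the
generators x_kl, gamma_j; this rewriting undoes the substitution and sends each relation of
TVB_n to a consequence of the claimed relations, which gives one direction of the presentation.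
Conversely, conjugation by rho_m acts on the x_kl and gamma_j through the transposition
(m, m+1), so every relabelling of the indices is realised by conjugation with a word in the
rho_i; as each claimed relation is a relabelling of one on the indices 1, ..., 4 that holds
in TVB_n, all of them hold. Finally, a word in the kernel equals its rewriting followed by a
word in the rho_i with trivial permutation, and such a word is trivial by the Coxeter
presentation of S_n, which follows from coset normal forms.\<close>

section \<open>Words modulo a presentation\<close>

lemmas [trans] = pres_eq.trans

lemma pres_eq_context: "pres_eq R a b \<Longrightarrow> pres_eq R (u @ a @ v) (u @ b @ v)"
proof (induction rule: pres_eq.induct)
  case (refl w) then show ?case by (rule pres_eq.refl)
next
  case (sym x w) then show ?case by (blast intro: pres_eq.sym)
next
  case (trans x y w) then show ?case by (metis pres_eq.trans)
next
  case (cancel u' a b v')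
  have "pres_eq R ((u @ u') @ [(a, b), (a, \<not> b)] @ (v' @ v)) ((u @ u') @ (v' @ v))"
    by (rule pres_eq.cancel)
  then show ?case by simp
next
  case (rel l q u' v')
  have "pres_eq R ((u @ u') @ l @ (v' @ v)) ((u @ u') @ q @ (v' @ v))"
    by (rule pres_eq.rel[OF rel])
  then show ?case by simp
qed

lemma pres_eq_rewrite: "pres_eq R a b \<Longrightarrow> x = u @ a @ v \<Longrightarrow> pres_eq R x (u @ b @ v)"
  using pres_eq_context by blast

lemma pres_eq_rewrite_back: "pres_eq R b a \<Longrightarrow> x = u @ a @ v \<Longrightarrow> pres_eq R x (u @ b @ v)"
  using pres_eq_context pres_eq.sym by blast

lemma pres_eq_append: "pres_eq R a b \<Longrightarrow> pres_eq R c d \<Longrightarrow> pres_eq R (a @ c) (b @ d)"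
  by (metis pres_eq_context append_Nil append_Nil2 pres_eq.trans)

lemma pres_eq_relation: "(l, q) \<in> R \<Longrightarrow> pres_eq R l q"
  using pres_eq.rel[of l q R "[]" "[]"] by simp

lemma pres_eq_cancel_pair: "pres_eq R [(a, b), (a, \<not> b)] []"
  using pres_eq.cancel[of R "[]" a b "[]"] by simp

lemma inv_word_append: "inv_word (u @ v) = inv_word v @ inv_word u"
  by (simp add: inv_word_def)

lemma inv_inv_word: "inv_word (inv_word w) = w"
  by (simp add: inv_word_def rev_map comp_def case_prod_beta)

lemma pres_eq_word_inv_word: "pres_eq R (w @ inv_word w) []"
proof (induction w)
  case Nil then show ?case by (simp add: inv_word_def pres_eq.refl)
next
  case (Cons a w)
  obtain x b where a: "a = (x, b)" by (cases a)
  have "pres_eq R ((a # w) @ inv_word (a # w)) ([a] @ (w @ inv_word w) @ [(x, \<not> b)])"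
    by (simp add: inv_word_def a pres_eq.refl)
  also have "pres_eq R \<dots> ([a] @ [] @ [(x, \<not> b)])"
    by (rule pres_eq_context[OF Cons.IH])
  also have "pres_eq R \<dots> []" using pres_eq_cancel_pair[of R x b] by (simp add: a)
  finally show ?case .
qed

lemma pres_eq_inv_word_word: "pres_eq R (inv_word w @ w) []"
  using pres_eq_word_inv_word[of R "inv_word w"] by (simp add: inv_inv_word)

lemma pres_eq_inv_word:
  assumes "pres_eq R a b"
  shows "pres_eq R (inv_word a) (inv_word b)"
proof -
  have "pres_eq R (inv_word a) (inv_word a @ (b @ inv_word b) @ [])"
    by (rule pres_eq_rewrite_back[OF pres_eq_word_inv_word]) simp
  also have "pres_eq R \<dots> (inv_word a @ (a @ inv_word b) @ [])"
    by (rule pres_eq_context, rule pres_eq_append[OF pres_eq.sym[OF assms] pres_eq.refl])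
  also have "pres_eq R \<dots> ([] @ [] @ inv_word b)"
    using pres_eq_context[OF pres_eq_inv_word_word[of R a], of "[]" "inv_word b"] by simp
  finally show ?thesis by simp
qed

section \<open>The Reidemeister--Schreier rewriting\<close>

text \<open>The permutation p is phi_H of the prefix read so far (composed with the initial p);
each sigma_i and gamma_j is rewritten into x_(p i)(p (i+1)), resp. gamma_(p j).\<close>

fun rs_rewrite :: "nat \<Rightarrow> (nat \<Rightarrow> nat) \<Rightarrow> tvb_gen word \<Rightarrow> tvh_gen word" where
  "rs_rewrite n p [] = []"
| "rs_rewrite n p ((Sig i, b) # w) =
     (if 1 \<le> i \<and> i \<le> n - 1 then [(X (p i) (p (Suc i)), b)] else []) @ rs_rewrite n p w"
| "rs_rewrite n p ((Rho i, b) # w) =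
     rs_rewrite n (if 1 \<le> i \<and> i \<le> n - 1 then p \<circ> transpose i (Suc i) else p) w"
| "rs_rewrite n p ((Gam j, b) # w) =
     (if 1 \<le> j \<and> j \<le> n then [(G (p j), b)] else []) @ rs_rewrite n p w"

fun rs_perm :: "nat \<Rightarrow> (nat \<Rightarrow> nat) \<Rightarrow> tvb_gen word \<Rightarrow> nat \<Rightarrow> nat" where
  "rs_perm n p [] = p"
| "rs_perm n p ((Sig i, b) # w) = rs_perm n p w"
| "rs_perm n p ((Rho i, b) # w) =
     rs_perm n (if 1 \<le> i \<and> i \<le> n - 1 then p \<circ> transpose i (Suc i) else p) w"
| "rs_perm n p ((Gam j, b) # w) = rs_perm n p w"

lemma rs_perm_append: "rs_perm n p (u @ v) = rs_perm n (rs_perm n p u) v"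
  by (induction n p u rule: rs_perm.induct) simp_all

lemma rs_rewrite_append:
  "rs_rewrite n p (u @ v) = rs_rewrite n p u @ rs_rewrite n (rs_perm n p u) v"
  by (induction n p u rule: rs_rewrite.induct) (simp_all add: rs_perm_append)

lemma rs_perm_comp: "rs_perm n (f \<circ> p) w = f \<circ> rs_perm n p w"
  by (induction n p w rule: rs_perm.induct) (auto simp: comp_def split: if_split_asm)

definition range_perm :: "nat \<Rightarrow> (nat \<Rightarrow> nat) \<Rightarrow> bool" where
  "range_perm n p = ((\<forall>i. 1 \<le> i \<and> i \<le> n \<longrightarrow> 1 \<le> p i \<and> p i \<le> n) \<and> inj_on p {1..n})"

lemma range_perm_id: "range_perm n id"
  by (simp add: range_perm_def)

lemma range_perm_inrange: "range_perm n p \<Longrightarrow> 1 \<le> i \<Longrightarrow> i \<le> n \<Longrightarrow> inrange n (p i)"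
  unfolding range_perm_def inrange_def by blast

lemma range_perm_neq:
  "range_perm n p \<Longrightarrow> 1 \<le> i \<Longrightarrow> i \<le> n \<Longrightarrow> 1 \<le> j \<Longrightarrow> j \<le> n \<Longrightarrow> i \<noteq> j \<Longrightarrow> p i \<noteq> p j"
  unfolding range_perm_def inj_on_def by (meson atLeastAtMost_iff)

lemma range_perm_comp_transpose:
  assumes "range_perm n p" "1 \<le> i" "i \<le> n - 1"
  shows "range_perm n (p \<circ> transpose i (Suc i))"
proof -
  have t: "transpose i (Suc i) ` {1..n} = {1..n}"
    using assms(2,3) by (intro transpose_image_eq) auto
  then have "1 \<le> transpose i (Suc i) j \<and> transpose i (Suc i) j \<le> n" if "1 \<le> j" "j \<le> n" for j
    using that by (metis atLeastAtMost_iff imageI)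
  with t assms(1) show ?thesis unfolding range_perm_def
    by (auto intro: comp_inj_on)
qed

lemma range_perm_rs_perm: "range_perm n p \<Longrightarrow> range_perm n (rs_perm n p w)"
  by (induction n p w rule: rs_perm.induct) (simp_all add: range_perm_comp_transpose)

lemma transpose_adj_commute:
  "i + 2 \<le> j \<or> j + 2 \<le> i \<Longrightarrow>
   transpose i (Suc i) \<circ> transpose j (Suc j) = transpose j (Suc j) \<circ> transpose i (Suc i)"
  by (rule ext) (unfold transpose_def, auto)

lemma transpose_adj_braid:
  "transpose i (Suc i) \<circ> transpose (Suc i) (Suc (Suc i)) \<circ> transpose i (Suc i) =
   transpose (Suc i) (Suc (Suc i)) \<circ> transpose i (Suc i) \<circ> transpose (Suc i) (Suc (Suc i))"
  by (rule ext) (unfold transpose_def, auto)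

lemma rs_perm_relation:
  assumes "(l, q) \<in> tvb_rels n"
  shows "rs_perm n p l = rs_perm n p q"
  using assms transpose_adj_commute transpose_adj_braid unfolding tvb_rels_def
  by (auto simp: comp_assoc transpose_def)

lemma tvh_rel_far_comm:
    "inrange n i \<Longrightarrow> inrange n j \<Longrightarrow> inrange n k \<Longrightarrow> inrange n l \<Longrightarrow> distinct [i, j, k, l] \<Longrightarrow>
     ([xx i j, xx k l], [xx k l, xx i j]) \<in> tvh_rels n"
  and tvh_rel_braid:
    "inrange n i \<Longrightarrow> inrange n j \<Longrightarrow> inrange n k \<Longrightarrow> distinct [i, j, k] \<Longrightarrow>
     ([xx i k, xx k j, xx i k], [xx k j, xx i k, xx k j]) \<in> tvh_rels n"
  and tvh_rel_gam_sq: "inrange n i \<Longrightarrow> ([gg i, gg i], []) \<in> tvh_rels n"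
  and tvh_rel_gam_comm:
    "inrange n i \<Longrightarrow> inrange n j \<Longrightarrow> i \<noteq> j \<Longrightarrow> ([gg i, gg j], [gg j, gg i]) \<in> tvh_rels n"
  and tvh_rel_gam_far_comm:
    "inrange n i \<Longrightarrow> inrange n j \<Longrightarrow> inrange n k \<Longrightarrow> distinct [i, j, k] \<Longrightarrow>
     ([xx i j, gg k], [gg k, xx i j]) \<in> tvh_rels n"
  and tvh_rel_twist:
    "inrange n i \<Longrightarrow> inrange n j \<Longrightarrow> i \<noteq> j \<Longrightarrow>
     ([xx i j], [gg i, gg j, xx j i, gg j, gg i]) \<in> tvh_rels n"
  unfolding tvh_rels_def by blast+

lemma rs_rewrite_relation:
  assumes "(l, q) \<in> tvb_rels n" "range_perm n p"
  shows "pres_eq (tvh_rels n) (rs_rewrite n p l) (rs_rewrite n p q)"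
proof -
  have inr: "inrange n (p i)" if "1 \<le> i" "i \<le> n" for i
    using range_perm_inrange[OF assms(2) that] .
  have neq: "p i \<noteq> p j" if "1 \<le> i" "i \<le> n" "1 \<le> j" "j \<le> n" "i \<noteq> j" for i j
    using range_perm_neq[OF assms(2) that] .
  show ?thesis using assms(1) unfolding tvb_rels_def
  proof (elim UnE CollectE exE conjE)
    fix i assume "(l, q) = ([s i, s (i + 1), s i], [s (i + 1), s i, s (i + 1)])" "1 \<le> i" "i \<le> n - 2"
    then show ?thesis by (auto simp: neq intro!: pres_eq_relation tvh_rel_braid inr)
  next
    fix i j assume "(l, q) = ([s i, s j], [s j, s i])" "1 \<le> i" "i \<le> n - 1" "1 \<le> j" "j \<le> n - 1"
      "i + 2 \<le> j \<or> j + 2 \<le> i"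
    then show ?thesis by (auto simp: neq intro!: pres_eq_relation tvh_rel_far_comm inr)
  next
    fix i assume "(l, q) = ([g i, g i], [])" "1 \<le> i" "i \<le> n"
    then show ?thesis by (auto intro!: pres_eq_relation tvh_rel_gam_sq inr)
  next
    fix i j assume "(l, q) = ([g i, g j], [g j, g i])" "1 \<le> i" "i \<le> n" "1 \<le> j" "j \<le> n"
    then show ?thesis
      by (cases "i = j")
          (auto simp: pres_eq.refl intro!: pres_eq_relation tvh_rel_gam_comm inr simp: neq)
  next
    fix i j assume "(l, q) = ([g j, s i], [s i, g j])" "1 \<le> i" "i \<le> n - 1" "1 \<le> j" "j \<le> n"
      "j \<noteq> i" "j \<noteq> i + 1"
    then show ?thesis
      by (auto simp: neq intro!: pres_eq.sym[OF pres_eq_relation] tvh_rel_gam_far_comm inr)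
  next
    fix i assume "(l, q) = ([r i, s i, r i], [g (i + 1), g i, s i, g i, g (i + 1)])" "1 \<le> i"
        "i \<le> n - 1"
    then show ?thesis by (auto simp: neq intro!: pres_eq_relation tvh_rel_twist inr)
  qed (auto simp: pres_eq.refl transpose_def)
qed

lemma rs_perm_cancel_pair: "rs_perm n p [(a, b), (a, \<not> b)] = p"
  by (cases a) (simp_all add: comp_assoc)

lemma rs_perm_pres_eq: "pres_eq (tvb_rels n) w1 w2 \<Longrightarrow> rs_perm n p w1 = rs_perm n p w2"
proof (induction arbitrary: p rule: pres_eq.induct)
  case (cancel u a b v)
  then show ?case by (simp only: rs_perm_append rs_perm_cancel_pair)
next
  case (rel l q u v)
  then show ?case by (simp add: rs_perm_append rs_perm_relation[OF rel])
qed simp_all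

lemma rs_rewrite_pres_eq:
  "pres_eq (tvb_rels n) w1 w2 \<Longrightarrow> range_perm n p
   \<Longrightarrow> pres_eq (tvh_rels n) (rs_rewrite n p w1) (rs_rewrite n p w2)"
proof (induction arbitrary: p rule: pres_eq.induct)
  case (sym x w) then show ?case by (metis pres_eq.sym)
next
  case (trans x y w) then show ?case by (metis pres_eq.trans)
next
  case (cancel u a b v)
  have "pres_eq (tvh_rels n) (rs_rewrite n q [(a, b), (a, \<not> b)]) []" for q
    by (cases a) (simp_all add: pres_eq_cancel_pair pres_eq.refl)
  from pres_eq_context[OF this]
  show ?case by (simp only: rs_rewrite_append rs_perm_append rs_perm_cancel_pair append_Nil)
next
  case (rel l q u v)
  have "range_perm n (rs_perm n p u)" using rel range_perm_rs_perm by blast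
  from pres_eq_context[OF rs_rewrite_relation[OF rel(1) this]]
  show ?case by (simp add: rs_rewrite_append rs_perm_append rs_perm_relation[OF rel(1)])
qed (rule pres_eq.refl)

definition rho_word :: "bool \<Rightarrow> nat list \<Rightarrow> tvb_gen word" where
  "rho_word c L = map (\<lambda>k. (Rho k, c)) L"

lemma rho_word_Nil [simp]: "rho_word c [] = []"
  and rho_word_Cons [simp]: "rho_word c (x # L) = (Rho x, c) # rho_word c L"
  and rho_word_append [simp]: "rho_word c (L @ M) = rho_word c L @ rho_word c M"
  by (simp_all add: rho_word_def)

lemma rev_rho_word: "rev (rho_word c L) = rho_word c (rev L)"
  by (simp add: rho_word_def rev_map)

lemma inv_word_rho_word: "inv_word (rho_word c L) = rev (rho_word (\<not> c) L)"
  and inv_word_rev_rho_word: "inv_word (rev (rho_word c L)) = rho_word (\<not> c) L"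
  by (simp_all add: inv_word_def rho_word_def rev_map)

lemma rs_rewrite_rho_word: "rs_rewrite n p (rho_word c L) = []"
  by (induction L arbitrary: p) auto

lemma rs_rewrite_rev_rho_word: "rs_rewrite n p (rev (rho_word c L)) = []"
  by (induction L arbitrary: p) (auto simp: rs_rewrite_append)

lemma rs_perm_rho_word_back: "rs_perm n p (rev (rho_word c L) @ rho_word c' L) = p"
proof (induction L arbitrary: p)
  case (Cons x L)
  have "rs_perm n p (rev (rho_word c (x # L)) @ rho_word c' (x # L))
      = rs_perm n (rs_perm n (rs_perm n p (rev (rho_word c L))) [(Rho x, c), (Rho x, c')])
          (rho_word c' L)"
    by (simp add: rs_perm_append)
  also have "\<dots> = p"
    using Cons.IH by (simp add: comp_assoc rs_perm_append)
  finally show ?case .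
qed simp

definition cyc :: "nat \<Rightarrow> nat \<Rightarrow> nat \<Rightarrow> nat" where
  "cyc a q x = (if x = a then q else if a < x \<and> x \<le> q then x - 1 else x)"

lemma rs_perm_rev_rho_word:
  "1 \<le> a \<Longrightarrow> a \<le> q \<Longrightarrow> q \<le> n \<Longrightarrow> rs_perm n p (rev (rho_word c [a..<q])) = p \<circ> cyc a q"
proof (induction q arbitrary: p)
  case (Suc q)
  show ?case
  proof (cases "a = Suc q")
    case True then show ?thesis by (auto simp: cyc_def fun_eq_iff)
  next
    case False
    then have a: "a \<le> q" using Suc.prems by simp
    have e: "rev (rho_word c [a..<Suc q]) = (Rho q, c) # rev (rho_word c [a..<q])"
      using a by simp
    have "rs_perm n (p \<circ> transpose q (Suc q)) (rev (rho_word c [a..<q]))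
        = p \<circ> transpose q (Suc q) \<circ> cyc a q"
      by (rule Suc.IH) (use a Suc.prems in auto)
    then have "rs_perm n p (rev (rho_word c [a..<Suc q])) = p \<circ> transpose q (Suc q) \<circ> cyc a q"
      unfolding e using a Suc.prems by (simp del: upt_Suc add: le_diff_conv2)
    moreover have "transpose q (Suc q) \<circ> cyc a q = cyc a (Suc q)"
      using a by (auto simp: fun_eq_iff cyc_def transpose_def)
    ultimately show ?thesis by (simp add: comp_assoc)
  qed
qed simp

lemma rs_perm_conj: "rs_perm n p (rev (rho_word c L) @ (Sig i, b) # rho_word c' L) = p"
  using rs_perm_rho_word_back[of n p c L c'] by (simp add: rs_perm_append)

lemma rs_rewrite_conj:
  assumes "1 \<le> i" "i < q" "q \<le> n" "a = i \<or> a = Suc i"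
  shows "rs_rewrite n p (rev (rho_word c [a..<q]) @ [(Sig i, b)] @ rho_word c' [a..<q])
       = [(X (p (cyc a q i)) (p (cyc a q (Suc i))), b)]"
proof -
  have "rs_perm n p (rev (rho_word c [a..<q])) = p \<circ> cyc a q"
    using assms by (intro rs_perm_rev_rho_word) auto
  moreover have "i \<le> n - 1" using assms by simp
  ultimately show ?thesis
    using assms(1) by (simp add: rs_rewrite_append rs_rewrite_rho_word rs_rewrite_rev_rho_word)
qed

definition gen_img :: "bool \<Rightarrow> tvh_gen \<Rightarrow> tvb_gen word" where
  "gen_img b y = (if b then tvh_img y else inv_word (tvh_img y))"

lemma subst_Nil [simp]: "subst [] = []"
  and subst_Cons: "subst ((y, b) # v) = gen_img b y @ subst v"
  and subst_append: "subst (u @ v) = subst u @ subst v"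
  by (simp_all add: subst_def gen_img_def)

lemma xword_less: "k < l
    \<Longrightarrow> xword k l = rev (rho_word True [Suc k..<l]) @ [s k] @ rho_word True [Suc k..<l]"
  by (auto simp: xword_def rhos_def rho_word_def)

lemma xword_greater: "l < k
    \<Longrightarrow> xword k l = rev (rho_word True [l..<k]) @ [s l] @ rho_word True [l..<k]"
  by (auto simp: xword_def rhos_def rho_word_def)

lemma gen_img_X_less:
  "k < l \<Longrightarrow> gen_img b (X k l) = rev (rho_word b [Suc k..<l]) @ [(Sig k, b)] @ rho_word b [Suc k..<l]"
  by (cases b) (simp_all add: gen_img_def tvh_img_def xword_less inv_word_append
      inv_word_rho_word inv_word_rev_rho_word, simp add: inv_word_def rho_word_def)

lemma gen_img_X_greater:
  "l < k \<Longrightarrow> gen_img b (X k l) = rev (rho_word b [l..<k]) @ [(Sig l, b)] @ rho_word b [l..<k]"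
  by (cases b) (simp_all add: gen_img_def tvh_img_def xword_greater inv_word_append
      inv_word_rho_word inv_word_rev_rho_word, simp add: inv_word_def rho_word_def)

fun relabel_gen :: "(nat \<Rightarrow> nat) \<Rightarrow> tvh_gen \<Rightarrow> tvh_gen" where
  "relabel_gen p (X k l) = X (p k) (p l)"
| "relabel_gen p (G j) = G (p j)"

definition relabel :: "(nat \<Rightarrow> nat) \<Rightarrow> tvh_gen word \<Rightarrow> tvh_gen word" where
  "relabel p v = map (\<lambda>(y, b). (relabel_gen p y, b)) v"

lemma relabel_id: "relabel id v = v"
proof -
  have "relabel_gen id y = y" for y by (cases y) auto
  then show ?thesis by (induction v) (auto simp: relabel_def)
qed

lemma tvh_valid_gen_X_cases:
  assumes "tvh_valid_gen n (X k l)"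
  obtains "1 \<le> k" "k < l" "l \<le> n" | "1 \<le> l" "l < k" "k \<le> n"
  using assms by (force simp: tvh_valid_gen_def)

lemma rs_perm_gen_img:
  assumes "tvh_valid_gen n y"
  shows "rs_perm n p (gen_img b y) = p"
proof (cases y)
  case (X k l)
  from assms[unfolded X] show ?thesis unfolding X
    by (cases rule: tvh_valid_gen_X_cases)
        (simp_all add: gen_img_X_less gen_img_X_greater rs_perm_conj)
qed (simp add: gen_img_def tvh_img_def inv_word_def)

lemma rs_rewrite_gen_img:
  assumes "tvh_valid_gen n y"
  shows "rs_rewrite n p (gen_img b y) = [(relabel_gen p y, b)]"
proof (cases y)
  case (X k l)
  from assms[unfolded X] show ?thesis
  proof (cases rule: tvh_valid_gen_X_cases)
    case 1
    then show ?thesis using rs_rewrite_conj[of k l n "Suc k" p b b b]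
      by (simp add: X gen_img_X_less cyc_def)
  next
    case 2
    then show ?thesis using rs_rewrite_conj[of l k n l p b b b]
      by (simp add: X gen_img_X_greater cyc_def)
  qed
next
  case (G j)
  then show ?thesis
    using assms by (auto simp: tvh_valid_gen_def gen_img_def tvh_img_def inv_word_def)
qed

lemma valid_tvh_Nil [simp]: "valid_tvh n []"
  by (simp add: valid_tvh_def)

lemma valid_tvh_append: "valid_tvh n (u @ v) = (valid_tvh n u \<and> valid_tvh n v)"
  by (auto simp: valid_tvh_def)

lemma valid_tvh_Cons: "valid_tvh n ((y, b) # v) = (tvh_valid_gen n y \<and> valid_tvh n v)"
  by (simp add: valid_tvh_def)

lemma rs_perm_subst: "valid_tvh n v \<Longrightarrow> rs_perm n p (subst v) = p"
proof (induction v)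
  case (Cons a v)
  then show ?case
    by (cases a) (simp add: valid_tvh_Cons subst_Cons rs_perm_append rs_perm_gen_img)
qed simp

lemma rs_rewrite_subst: "valid_tvh n v \<Longrightarrow> rs_rewrite n p (subst v) = relabel p v"
proof (induction v)
  case (Cons a v)
  then show ?case
    by (cases a) (simp add: valid_tvh_Cons subst_Cons rs_rewrite_append rs_rewrite_gen_img
        rs_perm_gen_img relabel_def)
qed (simp add: relabel_def)

theorem subst_pres_eq_imp_tvh_pres_eq:
  assumes "valid_tvh n v1" "valid_tvh n v2" "pres_eq (tvb_rels n) (subst v1) (subst v2)"
  shows "pres_eq (tvh_rels n) v1 v2"
  using rs_rewrite_pres_eq[OF assms(3) range_perm_id]
  by (simp add: rs_rewrite_subst[OF assms(1)] rs_rewrite_subst[OF assms(2)] relabel_id)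

section \<open>Conjugation by the rho_i\<close>

abbreviation tvb_eq :: "nat \<Rightarrow> tvb_gen word \<Rightarrow> tvb_gen word \<Rightarrow> bool" where
  "tvb_eq n \<equiv> pres_eq (tvb_rels n)"

lemma tvb_sigma_braid:
    "1 \<le> i \<Longrightarrow> Suc i \<le> n - 1 \<Longrightarrow> tvb_eq n [s i, s (Suc i), s i] [s (Suc i), s i, s (Suc i)]"
  and tvb_sigma_far_comm:
    "1 \<le> i \<Longrightarrow> i \<le> n - 1 \<Longrightarrow> 1 \<le> j \<Longrightarrow> j \<le> n - 1 \<Longrightarrow> i + 2 \<le> j \<or> j + 2 \<le> i \<Longrightarrow>
     tvb_eq n [s i, s j] [s j, s i]"
  and tvb_rho_sq: "1 \<le> i \<Longrightarrow> i \<le> n - 1 \<Longrightarrow> tvb_eq n [r i, r i] []"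
  and tvb_rho_far_comm:
    "1 \<le> i \<Longrightarrow> i \<le> n - 1 \<Longrightarrow> 1 \<le> j \<Longrightarrow> j \<le> n - 1 \<Longrightarrow> i + 2 \<le> j \<or> j + 2 \<le> i \<Longrightarrow>
     tvb_eq n [r i, r j] [r j, r i]"
  and tvb_rho_braid:
    "1 \<le> i \<Longrightarrow> Suc i \<le> n - 1 \<Longrightarrow> tvb_eq n [r i, r (Suc i), r i] [r (Suc i), r i, r (Suc i)]"
  and tvb_sigma_rho_far_comm:
    "1 \<le> i \<Longrightarrow> i \<le> n - 1 \<Longrightarrow> 1 \<le> j \<Longrightarrow> j \<le> n - 1 \<Longrightarrow> i + 2 \<le> j \<or> j + 2 \<le> i \<Longrightarrow>
     tvb_eq n [s i, r j] [r j, s i]"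
  and tvb_rho_rho_sigma:
    "1 \<le> i \<Longrightarrow> Suc i \<le> n - 1 \<Longrightarrow> tvb_eq n [r i, r (Suc i), s i] [s (Suc i), r i, r (Suc i)]"
  and tvb_gam_sq: "1 \<le> i \<Longrightarrow> i \<le> n \<Longrightarrow> tvb_eq n [g i, g i] []"
  and tvb_gam_comm:
    "1 \<le> i \<Longrightarrow> i \<le> n \<Longrightarrow> 1 \<le> j \<Longrightarrow> j \<le> n \<Longrightarrow> tvb_eq n [g i, g j] [g j, g i]"
  and tvb_gam_rho_far_comm:
    "1 \<le> i \<Longrightarrow> i \<le> n - 1 \<Longrightarrow> 1 \<le> j \<Longrightarrow> j \<le> n \<Longrightarrow> j \<noteq> i \<Longrightarrow> j \<noteq> Suc i \<Longrightarrow>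
     tvb_eq n [g j, r i] [r i, g j]"
  and tvb_gam_sigma_far_comm:
    "1 \<le> i \<Longrightarrow> i \<le> n - 1 \<Longrightarrow> 1 \<le> j \<Longrightarrow> j \<le> n \<Longrightarrow> j \<noteq> i \<Longrightarrow> j \<noteq> Suc i \<Longrightarrow>
     tvb_eq n [g j, s i] [s i, g j]"
  and tvb_rho_gam: "1 \<le> i \<Longrightarrow> i \<le> n - 1 \<Longrightarrow> tvb_eq n [r i, g i] [g (Suc i), r i]"
  and tvb_rho_sigma_rho:
    "1 \<le> i \<Longrightarrow> i \<le> n - 1 \<Longrightarrow> tvb_eq n [r i, s i, r i] [g (Suc i), g i, s i, g i, g (Suc i)]"
  by (rule pres_eq_relation, simp add: tvb_rels_def)+

lemma tvb_rho_inv: "1 \<le> m \<Longrightarrow> m \<le> n - 1 \<Longrightarrow> tvb_eq n [(Rho m, False)] [r m]"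
  using pres_eq_rewrite_back[OF tvb_rho_sq, of m n "[(Rho m, False)]" "[(Rho m, False)]" "[]"]
    pres_eq.cancel[of "tvb_rels n" "[]" "Rho m" False "[r m]"]
  by (auto intro: pres_eq.trans)

lemma rho_commute_rho_word:
  assumes "1 \<le> m" "m \<le> n - 1" "\<forall>x\<in>set L. 1 \<le> x \<and> x \<le> n - 1 \<and> (x + 2 \<le> m \<or> m + 2 \<le> x)"
  shows "tvb_eq n ([r m] @ rho_word True L) (rho_word True L @ [r m])"
  using assms(3)
proof (induction L)
  case (Cons x L)
  have "tvb_eq n ([r m] @ rho_word True (x # L)) ([] @ [r x, r m] @ rho_word True L)"
    by (rule pres_eq_rewrite[OF tvb_rho_far_comm]) (use assms Cons.prems in auto)
  also have "tvb_eq n \<dots> ([r x] @ (rho_word True L @ [r m]) @ [])"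
    by (rule pres_eq_rewrite[OF Cons.IH]) (use Cons.prems in auto)
  finally show ?case by simp
qed (simp add: pres_eq.refl)

lemma rho_word_commute_rho:
  assumes "1 \<le> m" "m \<le> n - 1" "\<forall>x\<in>set L. 1 \<le> x \<and> x \<le> n - 1 \<and> (x + 2 \<le> m \<or> m + 2 \<le> x)"
  shows "tvb_eq n (rho_word True L @ [r m]) ([r m] @ rho_word True L)"
  using rho_commute_rho_word[OF assms] by (rule pres_eq.sym)

lemma upt_split_at: "a \<le> m \<Longrightarrow> m < b \<Longrightarrow> [a..<b] = [a..<m] @ m # [Suc m..<b]"
proof -
  assume h: "a \<le> m" "m < b"
  have "[a..<b] = [a..<m] @ [m..<b]" using upt_add_eq_append[of a m "b - m"] h by simp
  then show ?thesis using upt_conv_Cons[OF h(2)] by simp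
qed

lemma rho_shift_rev_rho_word: assumes "1 \<le> a" "a \<le> m" "Suc m < b" "b \<le> n"
  shows "tvb_eq n ([r m] @ rho_word True (rev [a..<b])) (rho_word True (rev [a..<b]) @ [r (Suc m)])"
proof -
  have sp: "[a..<b] = [a..<m] @ m # Suc m # [Suc (Suc m)..<b]"
    using upt_split_at[of a m b] upt_conv_Cons[of "Suc m" b] assms by simp
  define A where "A = rho_word True (rev [Suc (Suc m)..<b])"
  define B where "B = rho_word True (rev [a..<m])"
  have e: "rho_word True (rev [a..<b]) = A @ [r (Suc m), r m] @ B"
    unfolding A_def B_def sp by (simp add: rho_word_def)
  have vm: "1 \<le> m" "m \<le> n - 1" "Suc m \<le> n - 1" using assms by auto
  have "tvb_eq n ([r m] @ A @ [r (Suc m), r m] @ B) ([] @ (A @ [r m]) @ [r (Suc m), r m] @ B)"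
    by (rule pres_eq_rewrite[OF rho_commute_rho_word[of m n "rev [Suc (Suc m)..<b]", folded A_def]])
      (use assms vm in auto)
  also have "tvb_eq n \<dots> (A @ [r (Suc m), r m, r (Suc m)] @ B)"
    by (rule pres_eq_rewrite[OF tvb_rho_braid[OF vm(1,3)], where u=A and v=B]) simp
  also have "tvb_eq n \<dots> ((A @ [r (Suc m), r m]) @ (B @ [r (Suc m)]) @ [])"
    by (rule pres_eq_rewrite[OF rho_commute_rho_word[of "Suc m" n "rev [a..<m]", folded B_def]])
        (use assms vm in auto)
  finally show ?thesis unfolding e by simp
qed

lemma rho_word_shift_rho: assumes "1 \<le> a" "a \<le> m" "Suc m < b" "b \<le> n"
  shows "tvb_eq n (rho_word True [a..<b] @ [r m]) ([r (Suc m)] @ rho_word True [a..<b])"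
proof -
  have sp: "[a..<b] = [a..<m] @ m # Suc m # [Suc (Suc m)..<b]"
    using upt_split_at[of a m b] upt_conv_Cons[of "Suc m" b] assms by simp
  define A where "A = rho_word True [Suc (Suc m)..<b]"
  define B where "B = rho_word True [a..<m]"
  have e: "rho_word True [a..<b] = B @ [r m, r (Suc m)] @ A"
    unfolding A_def B_def sp by (simp add: rho_word_def)
  have vm: "1 \<le> m" "m \<le> n - 1" "Suc m \<le> n - 1" using assms by auto
  have "tvb_eq n (B @ [r m, r (Suc m)] @ A @ [r m]) ((B @ [r m, r (Suc m)]) @ ([r m] @ A) @ [])"
    by (rule pres_eq_rewrite[OF rho_word_commute_rho[of m n "[Suc (Suc m)..<b]", folded A_def]])
        (use assms vm in auto)
  also have "tvb_eq n \<dots> (B @ [r (Suc m), r m, r (Suc m)] @ A)"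
    by (rule pres_eq_rewrite[OF tvb_rho_braid[OF vm(1,3)], where u=B and v=A]) simp
  also have "tvb_eq n \<dots> ([] @ ([r (Suc m)] @ B) @ [r m, r (Suc m)] @ A)"
    by (rule pres_eq_rewrite[OF rho_word_commute_rho[of "Suc m" n "[a..<m]", folded B_def]])
        (use assms vm in auto)
  finally show ?thesis unfolding e by simp
qed

lemma rho_conj_gam: assumes "1 \<le> m" "m \<le> n - 1" "1 \<le> j" "j \<le> n"
  shows "tvb_eq n [r m, g j, r m] [g (transpose m (Suc m) j)]"
proof -
  consider "j = m" | "j = Suc m" | "j \<noteq> m \<and> j \<noteq> Suc m" by blast
  then show ?thesis
  proof cases
    case 1
    have "tvb_eq n [r m, g j, r m] ([] @ [g (Suc m), r m] @ [r m])"
      by (rule pres_eq_rewrite[OF tvb_rho_gam[OF assms(1,2)]]) (simp add: 1)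
    also have "tvb_eq n \<dots> ([g (Suc m)] @ [] @ [])"
      by (rule pres_eq_rewrite[OF tvb_rho_sq[OF assms(1,2)]]) simp
    finally show ?thesis using 1 by simp
  next
    case 2
    have "tvb_eq n [r m, g j, r m] ([r m] @ [r m, g m] @ [])"
      by (rule pres_eq_rewrite_back[OF tvb_rho_gam[OF assms(1,2)]]) (simp add: 2)
    also have "tvb_eq n \<dots> ([] @ [] @ [g m])"
      by (rule pres_eq_rewrite[OF tvb_rho_sq[OF assms(1,2)]]) simp
    finally show ?thesis using 2 by simp
  next
    case 3
    have "tvb_eq n [r m, g j, r m] ([] @ [g j, r m] @ [r m])"
      by (rule pres_eq_rewrite_back[OF tvb_gam_rho_far_comm]) (use assms 3 in auto)
    also have "tvb_eq n \<dots> ([g j] @ [] @ [])"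
      by (rule pres_eq_rewrite[OF tvb_rho_sq[OF assms(1,2)]]) simp
    finally show ?thesis using 3 by simp
  qed
qed

definition x_adj :: "bool \<Rightarrow> nat \<Rightarrow> tvb_gen word" where
  "x_adj c p = (if c then [s p] else [r p, s p, r p])"

lemma x_adj_conj_rho_pair: assumes "1 \<le> p" "Suc p \<le> n - 1"
  shows "tvb_eq n ([r p, r (Suc p)] @ x_adj c p @ [r (Suc p), r p]) (x_adj c (Suc p))"
proof -
  have v: "p \<le> n - 1" using assms by simp
  have T: "tvb_eq n [r p, r (Suc p), s p, r (Suc p), r p] [s (Suc p)]"
  proof -
    have "tvb_eq n [r p, r (Suc p), s p, r (Suc p), r p] ([] @ [s (Suc p), r p, r (Suc p)]
        @ [r (Suc p), r p])"
      by (rule pres_eq_rewrite[OF tvb_rho_rho_sigma[OF assms]]) simp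
    also have "tvb_eq n \<dots> ([s (Suc p), r p] @ [] @ [r p])"
      by (rule pres_eq_rewrite[OF tvb_rho_sq[OF _ assms(2)]]) (use assms in simp_all)
    also have "tvb_eq n \<dots> ([s (Suc p)] @ [] @ [])"
      by (rule pres_eq_rewrite[OF tvb_rho_sq[OF assms(1) v]]) simp
    finally show ?thesis by simp
  qed
  show ?thesis
  proof (cases c)
    case True then show ?thesis using T by (simp add: x_adj_def)
  next
    case False
    have "tvb_eq n [r p, r (Suc p), r p, s p, r p, r (Suc p), r p] ([]
        @ [r (Suc p), r p, r (Suc p)] @ [s p, r p, r (Suc p), r p])"
      by (rule pres_eq_rewrite[OF tvb_rho_braid[OF assms]]) simp
    also have "tvb_eq n \<dots> ([r (Suc p), r p, r (Suc p), s p] @ [r (Suc p), r p, r (Suc p)] @ [])"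
      by (rule pres_eq_rewrite[OF tvb_rho_braid[OF assms]]) simp
    also have "tvb_eq n \<dots> ([r (Suc p)] @ [s (Suc p)] @ [r (Suc p)])"
      by (rule pres_eq_rewrite[OF T]) simp
    finally show ?thesis using False by (simp add: x_adj_def)
  qed
qed

lemma x_adj_rho_swap: assumes "1 \<le> i" "Suc i \<le> n - 1"
  shows "tvb_eq n ([r i] @ x_adj c (Suc i) @ [r i]) ([r (Suc i)] @ x_adj c i @ [r (Suc i)])"
proof -
  have v: "i \<le> n - 1" using assms by simp
  have T: "tvb_eq n [s (Suc i)] [r i, r (Suc i), s i, r (Suc i), r i]"
    using x_adj_conj_rho_pair[OF assms, of True] by (simp add: x_adj_def pres_eq.sym)
  show ?thesis
  proof (cases c)
    case True
    have "tvb_eq n [r i, s (Suc i), r i] ([r i] @ [r i, r (Suc i), s i, r (Suc i), r i] @ [r i])"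
      by (rule pres_eq_rewrite[OF T]) simp
    also have "tvb_eq n \<dots> ([] @ [] @ [r (Suc i), s i, r (Suc i), r i, r i])"
      by (rule pres_eq_rewrite[OF tvb_rho_sq[OF assms(1) v]]) simp
    also have "tvb_eq n \<dots> ([r (Suc i), s i, r (Suc i)] @ [] @ [])"
      by (rule pres_eq_rewrite[OF tvb_rho_sq[OF assms(1) v]]) simp
    finally show ?thesis using True by (simp add: x_adj_def)
  next
    case False
    have "tvb_eq n [r i, r (Suc i), s (Suc i), r (Suc i), r i] ([r i, r (Suc i)]
        @ [r i, r (Suc i), s i, r (Suc i), r i] @ [r (Suc i), r i])"
      by (rule pres_eq_rewrite[OF T]) simp
    also have "tvb_eq n \<dots> ([] @ [r (Suc i), r i, r (Suc i)]
        @ [r (Suc i), s i, r (Suc i), r i, r (Suc i), r i])"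
      by (rule pres_eq_rewrite[OF tvb_rho_braid[OF assms]]) simp
    also have "tvb_eq n \<dots> ([r (Suc i), r i] @ [] @ [s i, r (Suc i), r i, r (Suc i), r i])"
      by (rule pres_eq_rewrite[OF tvb_rho_sq[OF _ assms(2)]]) (use assms in simp_all)
    also have "tvb_eq n \<dots> ([r (Suc i), r i, s i, r (Suc i)] @ [r (Suc i), r i, r (Suc i)] @ [])"
      by (rule pres_eq_rewrite[OF tvb_rho_braid[OF assms]]) simp
    also have "tvb_eq n \<dots> ([r (Suc i), r i, s i] @ [] @ [r i, r (Suc i)])"
      by (rule pres_eq_rewrite[OF tvb_rho_sq[OF _ assms(2)]]) (use assms in simp_all)
    finally show ?thesis using False by (simp add: x_adj_def)
  qed
qed

lemma rho_commute_x_adj: assumes "1 \<le> j" "j \<le> n - 1" "1 \<le> p" "p \<le> n - 1" "j + 2 \<le> p \<or> p + 2 \<le> j"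
  shows "tvb_eq n ([r j] @ x_adj c p) (x_adj c p @ [r j])"
proof (cases c)
  case True
  have "tvb_eq n [r j, s p] [s p, r j]"
    by (rule pres_eq.sym, rule tvb_sigma_rho_far_comm) (use assms in auto)
  then show ?thesis using True by (simp add: x_adj_def)
next
  case False
  have "tvb_eq n [r j, r p, s p, r p] ([] @ [r p, r j] @ [s p, r p])"
    by (rule pres_eq_rewrite[OF tvb_rho_far_comm]) (use assms in auto)
  also have "tvb_eq n \<dots> ([r p] @ [s p, r j] @ [r p])"
    by (rule pres_eq_rewrite_back[OF tvb_sigma_rho_far_comm]) (use assms in auto)
  also have "tvb_eq n \<dots> ([r p, s p] @ [r p, r j] @ [])"
    by (rule pres_eq_rewrite[OF tvb_rho_far_comm]) (use assms in auto)
  finally show ?thesis using False by (simp add: x_adj_def)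
qed

definition x_span :: "nat \<Rightarrow> nat \<Rightarrow> bool \<Rightarrow> tvb_gen word" where
  "x_span p q c = rho_word True (rev [Suc p..<q]) @ x_adj c p @ rho_word True [Suc p..<q]"

lemma xword_eq_x_span: "k \<noteq> l \<Longrightarrow> xword k l = x_span (min k l) (max k l) (k < l)"
proof -
  assume "k \<noteq> l"
  then consider "k < l" | "l < k" by linarith
  then show ?thesis
  proof cases
    case 1 then show ?thesis by (simp add: xword_less x_span_def x_adj_def rev_rho_word)
  next
    case 2
    then have "[l..<k] = l # [Suc l..<k]" by (simp add: upt_conv_Cons)
    then show ?thesis using 2
      by (simp add: xword_greater x_span_def x_adj_def rev_rho_word rho_word_Cons)
  qed
qed

lemma rho_conj_x_span_far:
  assumes "1 \<le> p" "p < q" "q \<le> n" "1 \<le> m" "m \<le> n - 1" "Suc m < p \<or> q < m"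
  shows "tvb_eq n ([r m] @ x_span p q c @ [r m]) (x_span p q c)"
proof -
  let ?L = "rho_word True (rev [Suc p..<q])" and ?R = "rho_word True [Suc p..<q]"
  have far: "\<forall>x\<in>set (rev [Suc p..<q]). 1 \<le> x \<and> x \<le> n - 1 \<and> (x + 2 \<le> m \<or> m + 2 \<le> x)"
            "\<forall>x\<in>set [Suc p..<q]. 1 \<le> x \<and> x \<le> n - 1 \<and> (x + 2 \<le> m \<or> m + 2 \<le> x)"
    using assms by auto
  have "tvb_eq n ([r m] @ x_span p q c @ [r m]) ([] @ (?L @ [r m]) @ x_adj c p @ ?R @ [r m])"
    by (rule pres_eq_rewrite[OF rho_commute_rho_word[OF assms(4,5) far(1)]]) (simp add: x_span_def)
  also have "tvb_eq n \<dots> (?L @ (x_adj c p @ [r m]) @ ?R @ [r m])"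
    by (rule pres_eq_rewrite[OF rho_commute_x_adj]) (use assms in auto)
  also have "tvb_eq n \<dots> ((?L @ x_adj c p) @ (?R @ [r m]) @ [r m])"
    by (rule pres_eq_rewrite[OF rho_commute_rho_word[OF assms(4,5) far(2)]]) simp
  also have "tvb_eq n \<dots> ((?L @ x_adj c p @ ?R) @ [] @ [])"
    by (rule pres_eq_rewrite[OF tvb_rho_sq[OF assms(4,5)]]) simp
  finally show ?thesis by (simp add: x_span_def)
qed

lemma rho_conj_x_span_grow_left:
  assumes "2 \<le> p" "p < q" "q \<le> n" "m = p - 1"
  shows "tvb_eq n ([r m] @ x_span p q c @ [r m]) (x_span m q c)"
proof -
  let ?L = "rho_word True (rev [Suc p..<q])" and ?R = "rho_word True [Suc p..<q]"
  have m: "1 \<le> m" "m \<le> n - 1" "Suc m \<le> n - 1" "Suc m = p" using assms by auto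
  have far: "\<forall>x\<in>set (rev [Suc p..<q]). 1 \<le> x \<and> x \<le> n - 1 \<and> (x + 2 \<le> m \<or> m + 2 \<le> x)"
            "\<forall>x\<in>set [Suc p..<q]. 1 \<le> x \<and> x \<le> n - 1 \<and> (x + 2 \<le> m \<or> m + 2 \<le> x)"
    using assms by auto
  have "tvb_eq n ([r m] @ x_span p q c @ [r m]) ([] @ (?L @ [r m]) @ x_adj c p @ ?R @ [r m])"
    by (rule pres_eq_rewrite[OF rho_commute_rho_word[OF m(1,2) far(1)]]) (simp add: x_span_def)
  also have "tvb_eq n \<dots> ((?L @ [r m] @ x_adj c p) @ ([r m] @ ?R) @ [])"
    by (rule pres_eq_rewrite[OF rho_word_commute_rho[OF m(1,2) far(2)]]) simp
  also have "tvb_eq n \<dots> (?L @ ([r (Suc m)] @ x_adj c m @ [r (Suc m)]) @ ?R)"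
    by (rule pres_eq_rewrite[OF x_adj_rho_swap[OF m(1,3), of c]]) (simp add: m(4))
  also have "\<dots> = x_span m q c"
  proof -
    have "[Suc m..<q] = p # [Suc p..<q]" using assms m(4) by (simp add: upt_conv_Cons)
    then show ?thesis by (simp add: x_span_def m(4))
  qed
  finally show ?thesis .
qed

lemma rho_conj_x_span_flip:
  assumes "1 \<le> p" "Suc p \<le> n"
  shows "tvb_eq n ([r p] @ x_span p (Suc p) c @ [r p]) (x_span p (Suc p) (\<not> c))"
proof (cases c)
  case True then show ?thesis by (simp add: x_span_def x_adj_def pres_eq.refl)
next
  case False
  have p: "p \<le> n - 1" using assms by simp
  have "tvb_eq n [r p, r p, s p, r p, r p] ([] @ [] @ [s p, r p, r p])"
    by (rule pres_eq_rewrite[OF tvb_rho_sq[OF assms(1) p]]) simp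
  also have "tvb_eq n \<dots> ([s p] @ [] @ [])"
    by (rule pres_eq_rewrite[OF tvb_rho_sq[OF assms(1) p]]) simp
  finally show ?thesis using False by (simp add: x_span_def x_adj_def)
qed

lemma rho_conj_x_span_shrink_left:
  assumes "1 \<le> p" "Suc p < q" "q \<le> n"
  shows "tvb_eq n ([r p] @ x_span p q c @ [r p]) (x_span (Suc p) q c)"
proof -
  define L where "L = [Suc (Suc p)..<q]"
  let ?L = "rho_word True (rev L)" and ?R = "rho_word True L"
  have p: "p \<le> n - 1" "Suc p \<le> n - 1" using assms by auto
  have e: "[Suc p..<q] = Suc p # L" using assms by (simp add: upt_conv_Cons L_def)
  have far: "\<forall>x\<in>set (rev L). 1 \<le> x \<and> x \<le> n - 1 \<and> (x + 2 \<le> p \<or> p + 2 \<le> x)"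
            "\<forall>x\<in>set L. 1 \<le> x \<and> x \<le> n - 1 \<and> (x + 2 \<le> p \<or> p + 2 \<le> x)"
    using assms by (auto simp: L_def)
  have "tvb_eq n ([r p] @ x_span p q c @ [r p])
      ([] @ (?L @ [r p]) @ [r (Suc p)] @ x_adj c p @ [r (Suc p)] @ ?R @ [r p])"
    by (rule pres_eq_rewrite[OF rho_commute_rho_word[OF assms(1) p(1) far(1)]])
      (simp add: x_span_def e)
  also have "tvb_eq n \<dots> ((?L @ [r p, r (Suc p)] @ x_adj c p @ [r (Suc p)]) @ ([r p] @ ?R) @ [])"
    by (rule pres_eq_rewrite[OF rho_word_commute_rho[OF assms(1) p(1) far(2)]]) simp
  also have "tvb_eq n \<dots> (?L @ x_adj c (Suc p) @ ?R)"
    by (rule pres_eq_rewrite[OF x_adj_conj_rho_pair[OF assms(1) p(2)], where u = ?L and v = ?R])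
        simp
  finally show ?thesis by (simp add: x_span_def L_def)
qed

lemma rho_conj_x_span_inside:
  assumes "1 \<le> p" "p < m" "Suc m < q" "q \<le> n"
  shows "tvb_eq n ([r m] @ x_span p q c @ [r m]) (x_span p q c)"
proof -
  let ?L = "rho_word True (rev [Suc p..<q])" and ?R = "rho_word True [Suc p..<q]"
  have m: "1 \<le> m" "m \<le> n - 1" "Suc m \<le> n - 1" "p \<le> n - 1" using assms by auto
  have "tvb_eq n ([r m] @ x_span p q c @ [r m]) ([] @ (?L @ [r (Suc m)]) @ x_adj c p @ ?R @ [r m])"
    by (rule pres_eq_rewrite[OF rho_shift_rev_rho_word]) (use assms in \<open>simp_all add: x_span_def\<close>)
  also have "tvb_eq n \<dots> ((?L @ [r (Suc m)] @ x_adj c p) @ ([r (Suc m)] @ ?R) @ [])"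
    by (rule pres_eq_rewrite[OF rho_word_shift_rho]) (use assms in simp_all)
  also have "tvb_eq n \<dots> (?L @ (x_adj c p @ [r (Suc m)]) @ [r (Suc m)] @ ?R)"
    by (rule pres_eq_rewrite[OF rho_commute_x_adj]) (use assms m in auto)
  also have "tvb_eq n \<dots> ((?L @ x_adj c p) @ [] @ ?R)"
    by (rule pres_eq_rewrite[OF tvb_rho_sq]) (use m in simp_all)
  finally show ?thesis by (simp add: x_span_def)
qed

lemma rho_conj_x_span_shrink_right:
  assumes "1 \<le> p" "Suc p < q" "q \<le> n" "m = q - 1"
  shows "tvb_eq n ([r m] @ x_span p q c @ [r m]) (x_span p m c)"
proof -
  have m: "1 \<le> m" "m \<le> n - 1" using assms by auto
  have "q = Suc m" using assms by simp
  then have "[Suc p..<q] = [Suc p..<m] @ [m]" using assms(2) by simp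
  then have "tvb_eq n ([r m] @ x_span p q c @ [r m]) ([] @ [] @ x_span p m c @ [r m, r m])"
    by (intro pres_eq_rewrite[OF tvb_rho_sq[OF m]]) (simp add: x_span_def)
  also have "tvb_eq n \<dots> (x_span p m c @ [] @ [])"
    by (rule pres_eq_rewrite[OF tvb_rho_sq[OF m]]) simp
  finally show ?thesis by simp
qed

lemma x_span_grow_right: assumes "p < q"
  shows "[r q] @ x_span p q c @ [r q] = x_span p (Suc q) c"
  using assms by (simp add: x_span_def rho_word_def)

lemma rho_conj_xword:
  assumes "1 \<le> m" "m \<le> n - 1" "1 \<le> k" "k \<le> n" "1 \<le> l" "l \<le> n" "k \<noteq> l"
  shows "tvb_eq n ([r m] @ xword k l @ [r m])
                  (xword (transpose m (Suc m) k) (transpose m (Suc m) l))"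
proof -
  define p q c where "p = min k l" and "q = max k l" and "c = (k < l)"
  let ?k = "transpose m (Suc m) k" and ?l = "transpose m (Suc m) l"
  have x: "xword k l = x_span p q c" using assms(7) by (simp add: xword_eq_x_span p_def q_def c_def)
  have pq: "1 \<le> p" "p < q" "q \<le> n" using assms by (auto simp: p_def q_def)
  have "?k \<noteq> ?l" using assms(7) by (metis transpose_eq_imp_eq)
  then have X: "xword ?k ?l = x_span (min ?k ?l) (max ?k ?l) (?k < ?l)"
    by (rule xword_eq_x_span)
  consider (a) "Suc m < p \<or> q < m" | (b) "Suc m = p" | (c1) "m = p" "q = Suc p"
    | (c2) "m = p" "Suc p < q" | (d) "p < m" "Suc m < q" | (e) "p < m" "Suc m = q" | (f) "m = q"
    using pq by linarith
  then show ?thesis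
  proof cases
    case a
    then have "xword ?k ?l = x_span p q c"
      unfolding X using pq by (auto simp: transpose_def p_def q_def c_def)
    then show ?thesis unfolding x using rho_conj_x_span_far[OF pq assms(1,2) a] by simp
  next
    case b
    then have "xword ?k ?l = x_span m q c"
      unfolding X using pq by (auto simp: transpose_def p_def q_def c_def)
    moreover have b2: "2 \<le> p" "m = p - 1" using b assms(1) by auto
    ultimately show ?thesis
      unfolding x using rho_conj_x_span_grow_left[OF b2(1) pq(2,3) b2(2), of c] by simp
  next
    case c1
    then have "xword ?k ?l = x_span p (Suc p) (\<not> c)"
      unfolding X using pq by (auto simp: transpose_def p_def q_def c_def)
    then show ?thesis unfolding x using rho_conj_x_span_flip[of p n c] pq c1 by simp
  next
    case c2
    then have "xword ?k ?l = x_span (Suc p) q c"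
      unfolding X using pq by (auto simp: transpose_def p_def q_def c_def)
    then show ?thesis unfolding x using rho_conj_x_span_shrink_left[of p q n c] pq c2 by simp
  next
    case d
    then have "xword ?k ?l = x_span p q c"
      unfolding X using pq by (auto simp: transpose_def p_def q_def c_def)
    then show ?thesis unfolding x using rho_conj_x_span_inside[of p m q n c] pq d by simp
  next
    case e
    then have "xword ?k ?l = x_span p m c"
      unfolding X using pq by (auto simp: transpose_def p_def q_def c_def)
    moreover have e2: "Suc p < q" "m = q - 1" using e by auto
    ultimately show ?thesis
      unfolding x using rho_conj_x_span_shrink_right[OF pq(1) e2(1) pq(3) e2(2), of c] by simp
  next
    case f
    then have "xword ?k ?l = x_span p (Suc q) c"
      unfolding X using pq by (auto simp: transpose_def p_def q_def c_def)
    then show ?thesis unfolding x using x_span_grow_right[of p q c] pq f by (simp add: pres_eq.refl)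
  qed
qed

definition valid_rhos :: "nat \<Rightarrow> nat list \<Rightarrow> bool" where
  "valid_rhos n qs = (\<forall>x\<in>set qs. 1 \<le> x \<and> x \<le> n - 1)"

definition rho_perm :: "nat \<Rightarrow> nat list \<Rightarrow> nat \<Rightarrow> nat" where
  "rho_perm n qs = rs_perm n id (rho_word True qs)"

lemma rho_perm_Nil: "rho_perm n [] = id"
  by (simp add: rho_perm_def)

lemma rho_perm_Cons:
  "1 \<le> q \<Longrightarrow> q \<le> n - 1 \<Longrightarrow> rho_perm n (q # qs) = transpose q (Suc q) \<circ> rho_perm n qs"
  using rs_perm_comp[of n "transpose q (Suc q)" id "rho_word True qs"] by (simp add: rho_perm_def)

lemma rho_perm_append: "rho_perm n (qs @ qs') = rho_perm n qs \<circ> rho_perm n qs'"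
  using rs_perm_comp[of n "rho_perm n qs" id "rho_word True qs'"]
  by (simp add: rho_perm_def rs_perm_append)

lemma range_perm_rho_perm: "range_perm n (rho_perm n qs)"
  unfolding rho_perm_def by (rule range_perm_rs_perm[OF range_perm_id])

lemma valid_rhos_Nil [simp]: "valid_rhos n []"
  by (simp add: valid_rhos_def)

lemma valid_rhos_Cons: "valid_rhos n (q # qs) = (1 \<le> q \<and> q \<le> n - 1 \<and> valid_rhos n qs)"
  by (auto simp: valid_rhos_def)

lemma valid_rhos_append: "valid_rhos n (qs @ qs') = (valid_rhos n qs \<and> valid_rhos n qs')"
  by (auto simp: valid_rhos_def)

lemma valid_rhos_rev: "valid_rhos n (rev qs) = valid_rhos n qs"
  by (auto simp: valid_rhos_def)

lemma rho_word_rev_cancel: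
  "valid_rhos n qs \<Longrightarrow> tvb_eq n (rho_word True qs @ rho_word True (rev qs)) []"
proof (induction qs)
  case Nil then show ?case by (simp add: rho_word_def pres_eq.refl)
next
  case (Cons q qs)
  then have v: "1 \<le> q" "q \<le> n - 1" "valid_rhos n qs" by (auto simp: valid_rhos_Cons)
  have "tvb_eq n (rho_word True (q # qs) @ rho_word True (rev (q # qs))) ([r q] @ [] @ [r q])"
    by (rule pres_eq_rewrite[OF Cons.IH[OF v(3)]]) (simp add: rho_word_def)
  also have "tvb_eq n \<dots> []" using tvb_rho_sq[OF v(1,2)] by simp
  finally show ?case .
qed

lemma rev_rho_word_cancel:
  "valid_rhos n qs \<Longrightarrow> tvb_eq n (rho_word True (rev qs) @ rho_word True qs) []"
  using rho_word_rev_cancel[of n "rev qs"] by (simp add: valid_rhos_rev)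

lemma rho_word_False_eq: "valid_rhos n qs \<Longrightarrow> tvb_eq n (rho_word False qs) (rho_word True qs)"
proof (induction qs)
  case Nil then show ?case by (simp add: rho_word_def pres_eq.refl)
next
  case (Cons q qs)
  then have v: "1 \<le> q" "q \<le> n - 1" "valid_rhos n qs" by (auto simp: valid_rhos_Cons)
  show ?case using pres_eq_append[OF tvb_rho_inv[OF v(1,2)] Cons.IH[OF v(3)]]
    by (simp add: rho_word_def)
qed

lemma rho_word_conj_xword:
  assumes "valid_rhos n qs" "1 \<le> k" "k \<le> n" "1 \<le> l" "l \<le> n" "k \<noteq> l"
  shows "tvb_eq n (rho_word True qs @ xword k l @ rho_word True (rev qs))
                  (xword (rho_perm n qs k) (rho_perm n qs l))"
  using assms(1)
proof (induction qs)
  case (Cons q qs)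
  then have q: "1 \<le> q" "q \<le> n - 1" and qs: "valid_rhos n qs" by (auto simp: valid_rhos_Cons)
  let ?p = "rho_perm n qs"
  have "1 \<le> ?p k" "?p k \<le> n" "1 \<le> ?p l" "?p l \<le> n" "?p k \<noteq> ?p l"
    using range_perm_inrange[OF range_perm_rho_perm[of n qs]]
      range_perm_neq[OF range_perm_rho_perm[of n qs]]
      assms(2-) by (auto simp: inrange_def)
  note conj = rho_conj_xword[OF q this]
  have "tvb_eq n (rho_word True (q # qs) @ xword k l @ rho_word True (rev (q # qs)))
     ([r q] @ xword (?p k) (?p l) @ [r q])"
    by (rule pres_eq_rewrite[OF Cons.IH[OF qs]]) simp
  also have "tvb_eq n \<dots> (xword (rho_perm n (q # qs) k) (rho_perm n (q # qs) l))"
    using conj by (simp add: rho_perm_Cons[OF q])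
  finally show ?case .
qed (simp add: rho_perm_Nil pres_eq.refl)

lemma rho_word_conj_gam:
  assumes "valid_rhos n qs" "1 \<le> j" "j \<le> n"
  shows "tvb_eq n (rho_word True qs @ [g j] @ rho_word True (rev qs)) [g (rho_perm n qs j)]"
  using assms(1)
proof (induction qs)
  case (Cons q qs)
  then have q: "1 \<le> q" "q \<le> n - 1" and qs: "valid_rhos n qs" by (auto simp: valid_rhos_Cons)
  have "1 \<le> rho_perm n qs j" "rho_perm n qs j \<le> n"
    using range_perm_inrange[OF range_perm_rho_perm[of n qs]] assms(2,3) by (auto simp: inrange_def)
  note conj = rho_conj_gam[OF q this]
  have "tvb_eq n (rho_word True (q # qs) @ [g j] @ rho_word True (rev (q # qs)))
     ([r q] @ [g (rho_perm n qs j)] @ [r q])"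
    by (rule pres_eq_rewrite[OF Cons.IH[OF qs]]) simp
  also have "tvb_eq n \<dots> [g (rho_perm n (q # qs) j)]"
    using conj by (simp add: rho_perm_Cons[OF q])
  finally show ?case .
qed (simp add: rho_perm_Nil pres_eq.refl)

lemma rho_word_conj_tvh_img:
  assumes "valid_rhos n qs" "tvh_valid_gen n y"
  shows "tvb_eq n (rho_word True qs @ tvh_img y @ rho_word True (rev qs))
                  (tvh_img (relabel_gen (rho_perm n qs) y))"
proof (cases y)
  case (X k l)
  then show ?thesis using assms rho_word_conj_xword[OF assms(1), of k l]
    by (simp add: tvh_valid_gen_def tvh_img_def)
next
  case (G j)
  then show ?thesis using assms rho_word_conj_gam[OF assms(1), of j]
    by (simp add: tvh_valid_gen_def tvh_img_def)
qed

lemma rho_word_conj_gen_img: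
  assumes "valid_rhos n qs" "tvh_valid_gen n y"
  shows "tvb_eq n (rho_word True qs @ gen_img b y @ rho_word True (rev qs))
                  (gen_img b (relabel_gen (rho_perm n qs) y))"
proof (cases b)
  case True
  then show ?thesis using rho_word_conj_tvh_img[OF assms] by (simp add: gen_img_def)
next
  case False
  have "tvb_eq n (rho_word True qs @ inv_word (tvh_img y) @ rho_word True (rev qs))
             (rho_word False qs @ inv_word (tvh_img y) @ rho_word False (rev qs))"
    using assms(1)
    by (intro pres_eq_append[OF pres_eq.sym[OF rho_word_False_eq]
          pres_eq_append[OF pres_eq.refl pres_eq.sym[OF rho_word_False_eq]]])
      (simp_all add: valid_rhos_rev)
  also have "rho_word False qs @ inv_word (tvh_img y) @ rho_word False (rev qs) =
     inv_word (rho_word True qs @ tvh_img y @ rho_word True (rev qs))"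
    by (simp add: inv_word_append inv_word_rho_word inv_word_rev_rho_word rev_rho_word)
  also have "tvb_eq n \<dots> (inv_word (tvh_img (relabel_gen (rho_perm n qs) y)))"
    by (rule pres_eq_inv_word, rule rho_word_conj_tvh_img[OF assms])
  finally show ?thesis using False by (simp add: gen_img_def)
qed

lemma rho_word_conj_subst:
  "valid_rhos n qs \<Longrightarrow> valid_tvh n v \<Longrightarrow>
   tvb_eq n (rho_word True qs @ subst v @ rho_word True (rev qs))
            (subst (relabel (rho_perm n qs) v))"
proof (induction v)
  case Nil then show ?case by (simp add: subst_Nil relabel_def rho_word_rev_cancel)
next
  case (Cons a v)
  obtain y b where a: "a = (y, b)" by (cases a)
  have vy: "tvh_valid_gen n y" and vv: "valid_tvh n v" using Cons.prems a
    by (auto simp: valid_tvh_def)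
  have "tvb_eq n (rho_word True qs @ subst (a # v) @ rho_word True (rev qs))
     ((rho_word True qs @ gen_img b y) @ (rho_word True (rev qs) @ rho_word True qs) @ subst v @
         rho_word True (rev qs))"
    by (rule pres_eq_rewrite_back[OF rev_rho_word_cancel[OF Cons.prems(1)]])
        (simp add: a subst_Cons)
  also have "tvb_eq n \<dots> ((rho_word True qs @ gen_img b y @ rho_word True (rev qs))
      @ (rho_word True qs @ subst v @ rho_word True (rev qs)))"
    by (simp add: pres_eq.refl)
  also have "tvb_eq n \<dots> (gen_img b (relabel_gen (rho_perm n qs) y)
      @ subst (relabel (rho_perm n qs) v))"
    by (rule pres_eq_append[OF rho_word_conj_gen_img[OF Cons.prems(1) vy]
        Cons.IH[OF Cons.prems(1) vv]])
  finally show ?case by (simp add: a relabel_def subst_Cons)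
qed

lemma relabel_rho_perm_pres_eq:
  assumes "valid_rhos n qs" "valid_tvh n v1" "valid_tvh n v2" "tvb_eq n (subst v1) (subst v2)"
  shows "tvb_eq n (subst (relabel (rho_perm n qs) v1)) (subst (relabel (rho_perm n qs) v2))"
proof -
  have "tvb_eq n (subst (relabel (rho_perm n qs) v1))
      (rho_word True qs @ subst v1 @ rho_word True (rev qs))"
    by (rule pres_eq.sym, rule rho_word_conj_subst[OF assms(1,2)])
  also have "tvb_eq n \<dots> (rho_word True qs @ subst v2 @ rho_word True (rev qs))"
    by (rule pres_eq_context[OF assms(4)])
  also have "tvb_eq n \<dots> (subst (relabel (rho_perm n qs) v2))"
    by (rule rho_word_conj_subst[OF assms(1,3)])
  finally show ?thesis .
qed

lemma transpose_eq_rho_perm: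
  "1 \<le> a \<Longrightarrow> a \<le> b \<Longrightarrow> b \<le> n \<Longrightarrow> \<exists>qs. valid_rhos n qs \<and> rho_perm n qs = transpose a b"
proof (induction b)
  case (Suc b)
  consider "a = Suc b" | "a = b" | "a < b" using Suc.prems(2) by linarith
  then show ?case
  proof cases
    case 1
    then have "valid_rhos n [] \<and> rho_perm n [] = transpose a (Suc b)"
      by (simp add: valid_rhos_def rho_perm_Nil)
    then show ?thesis by blast
  next
    case 2
    then have "valid_rhos n [b] \<and> rho_perm n [b] = transpose a (Suc b)"
      using Suc.prems by (simp add: valid_rhos_def rho_perm_Cons rho_perm_Nil)
    then show ?thesis by blast
  next
    case 3
    have "b \<le> n" using Suc.prems(3) by simp
    then obtain qs where qs: "valid_rhos n qs" "rho_perm n qs = transpose a b"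
      using Suc.IH[OF Suc.prems(1) less_imp_le[OF 3]] by blast
    have b: "1 \<le> b" "b \<le> n - 1" using Suc.prems 3 by auto
    have "rho_perm n (b # qs @ [b]) = transpose b (Suc b) \<circ> transpose a b \<circ> transpose b (Suc b)"
      by (simp add: rho_perm_Cons[OF b] rho_perm_append qs(2) rho_perm_Nil comp_assoc)
    also have "\<dots> = transpose a (Suc b)"
      using 3 by (auto simp: fun_eq_iff transpose_def)
    finally show ?thesis using qs(1) b
      by (intro exI[of _ "b # qs @ [b]"]) (simp add: valid_rhos_Cons valid_rhos_append)
  qed
qed simp

lemma range_perm_surj_on:
  assumes "range_perm n p" "x \<in> {1..n}"
  obtains z where "z \<in> {1..n}" "p z = x"
proof -
  have "p ` {1..n} \<subseteq> {1..n}" "inj_on p {1..n}"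
    using assms(1) unfolding range_perm_def by auto
  then have "p ` {1..n} = {1..n}" by (intro endo_inj_surj) auto
  with assms(2) that show thesis by (metis imageE)
qed

lemma tuple_eq_rho_perm:
  "distinct t \<Longrightarrow> set t \<subseteq> {1..n} \<Longrightarrow>
   \<exists>qs. valid_rhos n qs \<and> (\<forall>c<length t. rho_perm n qs (Suc c) = t ! c)"
proof (induction t rule: rev_induct)
  case Nil
  show ?case by (intro exI[of _ "[]"]) simp
next
  case (snoc x t)
  obtain qs where qs: "valid_rhos n qs" "\<forall>c<length t. rho_perm n qs (Suc c) = t ! c"
    using snoc by auto
  have "x \<in> {1..n}" using snoc.prems by simp
  then obtain z where z: "z \<in> {1..n}" "rho_perm n qs z = x"
    using range_perm_surj_on[OF range_perm_rho_perm[of n qs]] by blast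
  have "Suc (length t) \<le> z"
  proof (rule ccontr)
    assume "\<not> Suc (length t) \<le> z"
    then have c: "z - 1 < length t" and "Suc (z - 1) = z" using z(1) by auto
    then have "x = t ! (z - 1)" using qs(2) z(2) by metis
    with c have "x \<in> set t" by simp
    then show False using snoc.prems(1) by simp
  qed
  then obtain qs' where qs': "valid_rhos n qs'" "rho_perm n qs' = transpose (Suc (length t)) z"
    using transpose_eq_rho_perm[of "Suc (length t)" z n] z by auto
  have "rho_perm n (qs @ qs') (Suc c) = (t @ [x]) ! c" if "c < length (t @ [x])" for c
  proof (cases "c < length t")
    case True
    then have "transpose (Suc (length t)) z (Suc c) = Suc c"
      using \<open>Suc (length t) \<le> z\<close> by (simp add: transpose_def)
    then show ?thesis using True qs(2) by (simp add: rho_perm_append qs'(2) nth_append)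
  next
    case False
    then have "c = length t" using that by simp
    then show ?thesis using z(2) by (simp add: rho_perm_append qs'(2))
  qed
  then show ?case using qs(1) qs'(1) by (metis valid_rhos_append)
qed

lemma distinct_length_le: "distinct t \<Longrightarrow> set t \<subseteq> {1..n} \<Longrightarrow> length t \<le> n"
  by (metis card_atLeastAtMost card_mono diff_Suc_1 distinct_card finite_atLeastAtMost)

section \<open>The relations of TVH_n hold in TVB_n\<close>

lemma valid_tvh_mono: "valid_tvh m v \<Longrightarrow> m \<le> n \<Longrightarrow> valid_tvh n v"
  by (fastforce simp: valid_tvh_def tvh_valid_gen_def split: tvh_gen.splits)

lemma relabel_cong:
  "valid_tvh m v \<Longrightarrow> (\<And>i. 1 \<le> i \<Longrightarrow> i \<le> m \<Longrightarrow> p i = p' i) \<Longrightarrow> relabel p v = relabel p' v"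
  by (induction v) (auto simp: relabel_def valid_tvh_def tvh_valid_gen_def split: tvh_gen.splits)

lemma subst_relabel_tuple_pres_eq:
  assumes "distinct t" "set t \<subseteq> {1..n}" "valid_tvh (length t) v1" "valid_tvh (length t) v2"
    and "tvb_eq n (subst v1) (subst v2)"
  shows "tvb_eq n (subst (relabel (\<lambda>i. t ! (i - 1)) v1)) (subst (relabel (\<lambda>i. t ! (i - 1)) v2))"
proof -
  obtain qs where qs: "valid_rhos n qs" "\<forall>c<length t. rho_perm n qs (Suc c) = t ! c"
    using tuple_eq_rho_perm[OF assms(1,2)] by blast
  have agree: "rho_perm n qs i = t ! (i - 1)" if "1 \<le> i" "i \<le> length t" for i
  proof -
    have "i - 1 < length t" using that by simp
    then have "rho_perm n qs (Suc (i - 1)) = t ! (i - 1)" using qs(2) by blast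
    then show ?thesis using that by simp
  qed
  have "length t \<le> n" by (rule distinct_length_le[OF assms(1,2)])
  then have "tvb_eq n (subst (relabel (rho_perm n qs) v1)) (subst (relabel (rho_perm n qs) v2))"
    using assms(3-5) by (intro relabel_rho_perm_pres_eq[OF qs(1)]) (auto intro: valid_tvh_mono)
  then show ?thesis
    using relabel_cong[OF assms(3) agree] relabel_cong[OF assms(4) agree] by simp
qed

lemma subst_twist_pres_eq:
  assumes "2 \<le> n"
  shows "tvb_eq n (subst [xx 1 2]) (subst [gg 1, gg 2, xx 2 1, gg 2, gg 1])"
proof -
  have "tvb_eq n [s 1] ([] @ [g 1, g 1] @ [s 1])"
    by (rule pres_eq_rewrite_back[OF tvb_gam_sq]) (use assms in simp_all)
  also have "tvb_eq n \<dots> ([g 1] @ [g 2, g 2] @ [g 1, s 1])"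
    by (rule pres_eq_rewrite_back[OF tvb_gam_sq]) (use assms in simp_all)
  also have "tvb_eq n \<dots> ([g 1, g 2, g 2, g 1, s 1] @ [g 1, g 1] @ [])"
    by (rule pres_eq_rewrite_back[OF tvb_gam_sq]) (use assms in simp_all)
  also have "tvb_eq n \<dots> ([g 1, g 2, g 2, g 1, s 1, g 1] @ [g 2, g 2] @ [g 1])"
    by (rule pres_eq_rewrite_back[OF tvb_gam_sq]) (use assms in simp_all)
  also have "tvb_eq n \<dots> ([g 1, g 2] @ [r 1, s 1, r 1] @ [g 2, g 1])"
    by (rule pres_eq_rewrite_back[OF tvb_rho_sigma_rho])
      (use assms in \<open>simp_all add: numeral_eq_Suc\<close>)
  finally show ?thesis
    by (simp add: subst_Cons gen_img_def tvh_img_def xword_def numeral_eq_Suc)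
qed

lemma subst_tvh_relation:
  assumes "(l, q) \<in> tvh_rels n"
  shows "tvb_eq n (subst l) (subst q)"
  using assms unfolding tvh_rels_def
proof (elim UnE CollectE exE conjE)
  fix i j k l'
  assume h: "(l, q) = ([xx i j, xx k l'], [xx k l', xx i j])"
    "inrange n i" "inrange n j" "inrange n k" "inrange n l'" "distinct [i, j, k, l']"
  have t: "set [i, j, k, l'] \<subseteq> {1..n}" using h by (auto simp: inrange_def)
  have "4 \<le> n" using distinct_length_le[OF h(6) t] by simp
  then have "tvb_eq n (subst [xx 1 2, xx 3 4]) (subst [xx 3 4, xx 1 2])"
    using tvb_sigma_far_comm[of 1 n 3] by (simp add: subst_Cons gen_img_def tvh_img_def xword_def)
  from subst_relabel_tuple_pres_eq[OF h(6) t _ _ this] show ?thesis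
    using h(1) by (simp add: valid_tvh_def tvh_valid_gen_def relabel_def)
next
  fix i j k
  assume h: "(l, q) = ([xx i k, xx k j, xx i k], [xx k j, xx i k, xx k j])"
    "inrange n i" "inrange n j" "inrange n k" "distinct [i, j, k]"
  have d: "distinct [i, k, j]" using h by auto
  have t: "set [i, k, j] \<subseteq> {1..n}" using h by (auto simp: inrange_def)
  have "3 \<le> n" using distinct_length_le[OF d t] by simp
  then have "tvb_eq n (subst [xx 1 2, xx 2 3, xx 1 2]) (subst [xx 2 3, xx 1 2, xx 2 3])"
    using tvb_sigma_braid[of 1 n]
    by (simp add: subst_Cons gen_img_def tvh_img_def xword_def numeral_eq_Suc)
  from subst_relabel_tuple_pres_eq[OF d t _ _ this] show ?thesis
    using h(1) by (simp add: valid_tvh_def tvh_valid_gen_def relabel_def)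
next
  fix i assume "(l, q) = ([gg i, gg i], [])" "inrange n i"
  then show ?thesis using tvb_gam_sq[of i n]
    by (simp add: subst_Cons gen_img_def tvh_img_def inrange_def)
next
  fix i j assume "(l, q) = ([gg i, gg j], [gg j, gg i])" "inrange n i" "inrange n j"
  then show ?thesis using tvb_gam_comm[of i n j]
    by (simp add: subst_Cons gen_img_def tvh_img_def inrange_def)
next
  fix i j k
  assume h: "(l, q) = ([xx i j, gg k], [gg k, xx i j])"
    "inrange n i" "inrange n j" "inrange n k" "distinct [i, j, k]"
  have t: "set [i, j, k] \<subseteq> {1..n}" using h by (auto simp: inrange_def)
  have "3 \<le> n" using distinct_length_le[OF h(5) t] by simp
  then have "tvb_eq n (subst [xx 1 2, gg 3]) (subst [gg 3, xx 1 2])"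
    using pres_eq.sym[OF tvb_gam_sigma_far_comm[of 1 n 3]]
    by (simp add: subst_Cons gen_img_def tvh_img_def xword_def)
  from subst_relabel_tuple_pres_eq[OF h(5) t _ _ this] show ?thesis
    using h(1) by (simp add: valid_tvh_def tvh_valid_gen_def relabel_def)
next
  fix i j
  assume h: "(l, q) = ([xx i j], [gg i, gg j, xx j i, gg j, gg i])"
    "inrange n i" "inrange n j" "i \<noteq> j"
  have d: "distinct [i, j]" using h by auto
  have t: "set [i, j] \<subseteq> {1..n}" using h by (auto simp: inrange_def)
  have "2 \<le> n" using distinct_length_le[OF d t] by simp
  from subst_relabel_tuple_pres_eq[OF d t _ _ subst_twist_pres_eq[OF this]] show ?thesis
    using h(1) by (simp add: valid_tvh_def tvh_valid_gen_def relabel_def)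
qed

theorem tvh_pres_eq_imp_subst_pres_eq:
  "pres_eq (tvh_rels n) v1 v2 \<Longrightarrow> tvb_eq n (subst v1) (subst v2)"
proof (induction rule: pres_eq.induct)
  case (sym x w) then show ?case by (blast intro: pres_eq.sym)
next
  case (trans x y w) then show ?case by (blast intro: pres_eq.trans)
next
  case (cancel u a b v)
  have "tvb_eq n (gen_img b a @ gen_img (\<not> b) a) []"
    by (cases b) (simp_all add: gen_img_def pres_eq_word_inv_word pres_eq_inv_word_word)
  from pres_eq_context[OF this, of "subst u" "subst v"] show ?case
    by (simp add: subst_append subst_Cons)
next
  case (rel l q u v)
  from pres_eq_context[OF subst_tvh_relation[OF rel], of "subst u" "subst v"] show ?case
    by (simp add: subst_append)
qed (rule pres_eq.refl)

section \<open>The x_kl and gamma_j generate the kernel of phi_H\<close>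

lemma valid_tvb_Cons: "valid_tvb n ((x, b) # w) = (tvb_valid_gen n x \<and> valid_tvb n w)"
  by (auto simp: valid_tvb_def)

lemma phiH_Cons: "phiH ((x, b) # w) = (if b then letter_perm x else inv (letter_perm x)) \<circ> phiH w"
  by (simp add: phiH_def)

lemma rs_perm_eq_phiH: "valid_tvb n w \<Longrightarrow> rs_perm n p w = p \<circ> phiH w"
proof (induction w arbitrary: p)
  case (Cons a w)
  obtain x b where a: "a = (x, b)" by (cases a)
  have x: "tvb_valid_gen n x" and w: "valid_tvb n w" using Cons.prems a
    by (auto simp: valid_tvb_Cons)
  show ?case
  proof (cases x)
    case (Rho i)
    then have "1 \<le> i" "i \<le> n - 1" using x by (auto simp: tvb_valid_gen_def)
    then show ?thesis using Cons.IH[OF w, of "p \<circ> transpose i (Suc i)"]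
      by (simp add: a Rho phiH_Cons letter_perm_def comp_def)
  qed (use Cons.IH[OF w] in \<open>simp_all add: a phiH_Cons letter_perm_def\<close>)
qed (simp add: phiH_def)

lemma valid_rs_rewrite: "range_perm n p \<Longrightarrow> valid_tvh n (rs_rewrite n p w)"
proof (induction w arbitrary: p)
  case (Cons a w)
  obtain x b where a: "a = (x, b)" by (cases a)
  have "1 \<le> i \<Longrightarrow> i \<le> n - 1 \<Longrightarrow> tvh_valid_gen n (X (p i) (p (Suc i)))" for i
    using range_perm_inrange[OF Cons.prems] range_perm_neq[OF Cons.prems, of i "Suc i"]
    by (auto simp: tvh_valid_gen_def inrange_def)
  moreover have "1 \<le> j \<Longrightarrow> j \<le> n \<Longrightarrow> tvh_valid_gen n (G (p j))" for j
    using range_perm_inrange[OF Cons.prems] by (auto simp: tvh_valid_gen_def inrange_def)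
  ultimately show ?case using Cons.IH Cons.prems range_perm_comp_transpose[OF Cons.prems]
    by (cases x) (simp_all add: a valid_tvh_Cons valid_tvh_append)
qed simp

fun rho_letters :: "tvb_gen word \<Rightarrow> nat list" where
  "rho_letters [] = []"
| "rho_letters ((Rho i, b) # w) = i # rho_letters w"
| "rho_letters ((Sig i, b) # w) = rho_letters w"
| "rho_letters ((Gam j, b) # w) = rho_letters w"

lemma valid_rhos_rho_letters: "valid_tvb n w \<Longrightarrow> valid_rhos n (rho_letters w)"
  by (induction w rule: rho_letters.induct)
    (auto simp: valid_tvb_Cons valid_rhos_Cons tvb_valid_gen_def)

lemma rs_perm_rho_letters: "rs_perm n p w = rs_perm n p (rho_word True (rho_letters w))"
  by (induction w arbitrary: p rule: rho_letters.induct) simp_all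

lemma rho_word_move_letter:
  assumes "valid_rhos n qs" "tvh_valid_gen n y" "gen_img b y = [a]"
  shows "tvb_eq n (rho_word True qs @ a # w)
      (gen_img b (relabel_gen (rho_perm n qs) y) @ rho_word True qs @ w)"
proof -
  have "tvb_eq n (rho_word True qs @ a # w)
      ((rho_word True qs @ [a]) @ (rho_word True (rev qs) @ rho_word True qs) @ w)"
    by (rule pres_eq_rewrite_back[OF rev_rho_word_cancel[OF assms(1)]]) simp
  also have "\<dots> = [] @ (rho_word True qs @ gen_img b y @ rho_word True (rev qs))
      @ rho_word True qs @ w"
    using assms(3) by simp
  also have "tvb_eq n \<dots> ([] @ gen_img b (relabel_gen (rho_perm n qs) y) @ rho_word True qs @ w)"
    by (rule pres_eq_rewrite[OF rho_word_conj_gen_img[OF assms(1,2)]]) simp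
  finally show ?thesis by simp
qed

lemma rho_word_append_eq_subst:
  "valid_tvb n w \<Longrightarrow> valid_rhos n qs \<Longrightarrow>
   tvb_eq n (rho_word True qs @ w)
       (subst (rs_rewrite n (rho_perm n qs) w) @ rho_word True (qs @ rho_letters w))"
proof (induction w arbitrary: qs)
  case (Cons a w)
  obtain x b where a: "a = (x, b)" by (cases a)
  have x: "tvb_valid_gen n x" and w: "valid_tvb n w" using Cons.prems(1) a
    by (auto simp: valid_tvb_Cons)
  let ?p = "rho_perm n qs"
  let ?rest = "subst (rs_rewrite n ?p w) @ rho_word True (qs @ rho_letters w)"
  note IH = pres_eq_append[OF pres_eq.refl Cons.IH[OF w Cons.prems(2)]]
  show ?case
  proof (cases x)
    case (Sig i)
    then have i: "1 \<le> i" "i \<le> n - 1" using x by (auto simp: tvb_valid_gen_def)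
    then have "tvh_valid_gen n (X i (Suc i))" by (auto simp: tvh_valid_gen_def)
    from rho_word_move_letter[OF Cons.prems(2) this, of b a w]
    have "tvb_eq n (rho_word True qs @ a # w)
        (gen_img b (X (?p i) (?p (Suc i))) @ rho_word True qs @ w)"
      by (simp add: a Sig gen_img_def tvh_img_def xword_def inv_word_def)
    also have "tvb_eq n \<dots> (gen_img b (X (?p i) (?p (Suc i))) @ ?rest)"
      by (rule IH)
    finally show ?thesis using i by (simp add: a Sig subst_Cons)
  next
    case (Gam j)
    then have j: "1 \<le> j" "j \<le> n" using x by (auto simp: tvb_valid_gen_def)
    then have "tvh_valid_gen n (G j)" by (auto simp: tvh_valid_gen_def)
    from rho_word_move_letter[OF Cons.prems(2) this, of b a w]
    have "tvb_eq n (rho_word True qs @ a # w) (gen_img b (G (?p j)) @ rho_word True qs @ w)"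
      by (simp add: a Gam gen_img_def tvh_img_def inv_word_def)
    also have "tvb_eq n \<dots> (gen_img b (G (?p j)) @ ?rest)"
      by (rule IH)
    finally show ?thesis using j by (simp add: a Gam subst_Cons)
  next
    case (Rho i)
    then have i: "1 \<le> i" "i \<le> n - 1" using x by (auto simp: tvb_valid_gen_def)
    have "tvb_eq n [a] [r i]"
      using tvb_rho_inv[OF i] a Rho by (cases b) (simp_all add: pres_eq.refl)
    from pres_eq_context[OF this, of "rho_word True qs" w]
    have "tvb_eq n (rho_word True qs @ a # w) (rho_word True (qs @ [i]) @ w)" by simp
    also have "tvb_eq n \<dots> (subst (rs_rewrite n (rho_perm n (qs @ [i])) w)
        @ rho_word True ((qs @ [i]) @ rho_letters w))"
      using Cons.prems(2) i by (intro Cons.IH[OF w]) (simp add: valid_rhos_append valid_rhos_Cons)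
    also have "rho_perm n (qs @ [i]) = ?p \<circ> transpose i (Suc i)"
      by (simp add: rho_perm_append rho_perm_Cons[OF i] rho_perm_Nil)
    finally show ?thesis using i by (simp add: a Rho comp_def)
  qed
qed (simp add: pres_eq.refl)

lemma rho_perm_fixes:
  "valid_rhos n u \<Longrightarrow> (\<forall>x\<in>set u. x \<noteq> y \<and> Suc x \<noteq> y) \<Longrightarrow> rho_perm n u y = y"
proof (induction u)
  case (Cons x u)
  then have "1 \<le> x" "x \<le> n - 1" by (auto simp: valid_rhos_Cons)
  with Cons show ?case by (simp add: rho_perm_Cons valid_rhos_Cons transpose_def)
qed (simp add: rho_perm_Nil)

lemma rho_perm_pres_eq:
  "tvb_eq n (rho_word True qs) (rho_word True qs') \<Longrightarrow> rho_perm n qs = rho_perm n qs'"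
  unfolding rho_perm_def by (rule rs_perm_pres_eq)

text \<open>Normal form of a word in rho_1, ..., rho_m: u rho_m rho_(m-1) ... rho_k with u a
word in rho_1, ..., rho_(m-1), from the coset decomposition of S_(m+1) over S_m.\<close>

definition coset_nf :: "nat \<Rightarrow> nat list \<Rightarrow> nat \<Rightarrow> bool" where
  "coset_nf m u k = (1 \<le> k \<and> k \<le> Suc m \<and> (\<forall>x\<in>set u. 1 \<le> x \<and> x < m))"

lemma coset_nf_append_rho:
  assumes "Suc m \<le> n" "coset_nf m u k" "1 \<le> j" "j \<le> m"
  obtains u' k' where "coset_nf m u' k'"
    "tvb_eq n (rho_word True (u @ rev [k..<Suc m] @ [j])) (rho_word True (u' @ rev [k'..<Suc m]))"
proof -
  have k: "1 \<le> k" "k \<le> Suc m" and u: "\<forall>x\<in>set u. 1 \<le> x \<and> x < m"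
    using assms(2) by (auto simp: coset_nf_def)
  let ?R = "\<lambda>k. rho_word True (rev [k..<Suc m])"
  have word: "rho_word True (u @ rev [k..<Suc m] @ [j]) = rho_word True u @ ?R k @ [r j]" by simp
  consider "Suc j = k" | "j + 2 \<le> k" | "j = k" | "k < j" using k by linarith
  then show thesis
  proof cases
    case 1
    have "coset_nf m u j" using u 1 assms(3) k by (simp add: coset_nf_def)
    moreover have "u @ rev [k..<Suc m] @ [j] = u @ rev [j..<Suc m]"
      using 1 k by (simp add: upt_conv_Cons del: upt_Suc)
    ultimately show thesis using that[of u j] by (simp add: pres_eq.refl)
  next
    case 2
    have "coset_nf m (u @ [j]) k" using u k 2 assms(3) by (simp add: coset_nf_def)
    moreover have
        "tvb_eq n (rho_word True u @ ?R k @ [r j]) (rho_word True u @ ([r j] @ ?R k) @ [])"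
      by (rule pres_eq_rewrite[OF rho_word_commute_rho]) (use 2 assms in auto)
    then have "tvb_eq n (rho_word True (u @ rev [k..<Suc m] @ [j]))
        (rho_word True ((u @ [j]) @ rev [k..<Suc m]))"
      by (simp del: upt_Suc)
    ultimately show thesis by (rule that)
  next
    case 3
    have "coset_nf m u (Suc k)" using u k 3 assms(4) by (simp add: coset_nf_def)
    moreover have "?R k = ?R (Suc k) @ [r k]" using 3 assms(4)
      by (simp add: upt_conv_Cons del: upt_Suc)
    then have "tvb_eq n (rho_word True u @ ?R k @ [r j]) ((rho_word True u @ ?R (Suc k)) @ [] @ [])"
      by (intro pres_eq_rewrite[OF tvb_rho_sq]) (use 3 k assms in \<open>simp_all del: upt_Suc\<close>)
    then have "tvb_eq n (rho_word True (u @ rev [k..<Suc m] @ [j]))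
        (rho_word True (u @ rev [Suc k..<Suc m]))"
      by (simp del: upt_Suc)
    ultimately show thesis by (rule that)
  next
    case 4
    have "coset_nf m (u @ [j - 1]) k" using u k 4 assms(4) by (auto simp: coset_nf_def)
    moreover have
        "tvb_eq n (rho_word True u @ ?R k @ [r (Suc (j - 1))])
        (rho_word True u @ ([r (j - 1)] @ ?R k) @ [])"
      by (rule pres_eq_rewrite_back[OF rho_shift_rev_rho_word])
          (use 4 k assms in \<open>simp_all del: upt_Suc\<close>)
    then have "tvb_eq n (rho_word True (u @ rev [k..<Suc m] @ [j]))
        (rho_word True ((u @ [j - 1]) @ rev [k..<Suc m]))"
      using 4 by (simp del: upt_Suc)
    ultimately show thesis by (rule that)
  qed
qed

lemma rho_word_coset_nf:
  assumes "Suc m \<le> n" "\<forall>x\<in>set qs. 1 \<le> x \<and> x \<le> m"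
  obtains u k where "coset_nf m u k"
      "tvb_eq n (rho_word True qs) (rho_word True (u @ rev [k..<Suc m]))"
  using assms(2)
proof (induction qs arbitrary: thesis rule: rev_induct)
  case Nil
  show ?case by (rule Nil.prems(1)[of "[]" "Suc m"]) (simp_all add: coset_nf_def pres_eq.refl)
next
  case (snoc j qs)
  have qs: "\<forall>x\<in>set qs. 1 \<le> x \<and> x \<le> m" and j: "1 \<le> j" "j \<le> m" using snoc.prems(2) by auto
  obtain u k where nf: "coset_nf m u k" and eq:
      "tvb_eq n (rho_word True qs) (rho_word True (u @ rev [k..<Suc m]))"
    by (rule snoc.IH[OF _ qs])
  obtain u' k' where nf': "coset_nf m u' k'"
    and eq': "tvb_eq n (rho_word True (u @ rev [k..<Suc m] @ [j]))
        (rho_word True (u' @ rev [k'..<Suc m]))"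
    by (rule coset_nf_append_rho[OF assms(1) nf j])
  have "tvb_eq n (rho_word True (qs @ [j])) (rho_word True (u @ rev [k..<Suc m] @ [j]))"
    using pres_eq_append[OF eq pres_eq.refl[of _ "[r j]"]] by (simp del: upt_Suc)
  then show ?case by (rule snoc.prems(1)[OF nf' pres_eq.trans[OF _ eq']])
qed

lemma rho_word_trivial_perm:
  "m \<le> n \<Longrightarrow> \<forall>x\<in>set qs. 1 \<le> x \<and> x < m \<Longrightarrow> rho_perm n qs = id \<Longrightarrow> tvb_eq n (rho_word True qs) []"
proof (induction m arbitrary: qs)
  case 0
  then show ?case by (simp add: pres_eq.refl)
next
  case (Suc m)
  have "Suc m \<le> n" "\<forall>x\<in>set qs. 1 \<le> x \<and> x \<le> m" using Suc.prems(1,2) by auto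
  then obtain u k where nf: "coset_nf m u k"
    and eq: "tvb_eq n (rho_word True qs) (rho_word True (u @ rev [k..<Suc m]))"
    by (rule rho_word_coset_nf)
  have u: "\<forall>x\<in>set u. 1 \<le> x \<and> x < m" and k: "1 \<le> k" "k \<le> Suc m"
    using nf by (auto simp: coset_nf_def)
  have "valid_rhos n u" using u Suc.prems(1) by (auto simp: valid_rhos_def)
  have perm: "rho_perm n qs = rho_perm n u \<circ> rho_perm n (rev [k..<Suc m])"
    using rho_perm_pres_eq[OF eq] by (simp add: rho_perm_append)
  have "k = Suc m"
  proof (rule ccontr)
    assume "k \<noteq> Suc m"
    then have "rho_perm n (rev [k..<Suc m]) k = Suc m"
      using rs_perm_rev_rho_word[of k "Suc m" n id True] k Suc.prems(1)
      by (simp add: rho_perm_def rev_rho_word cyc_def)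
    moreover have "rho_perm n u (Suc m) = Suc m"
      by (rule rho_perm_fixes[OF \<open>valid_rhos n u\<close>]) (use u in auto)
    ultimately have "rho_perm n qs k = Suc m" using perm by simp
    then show False using Suc.prems(3) \<open>k \<noteq> Suc m\<close> by simp
  qed
  then have eq_u: "tvb_eq n (rho_word True qs) (rho_word True u)" using eq by simp
  then have "rho_perm n u = id" using rho_perm_pres_eq Suc.prems(3) by metis
  then have "tvb_eq n (rho_word True u) []" using Suc.prems(1) u by (intro Suc.IH) auto
  with eq_u show ?case by (rule pres_eq.trans)
qed

lemma kernel_eq_subst:
  assumes "valid_tvb n w" "phiH w = id"
  shows "\<exists>v. valid_tvh n v \<and> tvb_eq n (subst v) w"
proof -
  have letters: "valid_rhos n (rho_letters w)" by (rule valid_rhos_rho_letters[OF assms(1)])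
  have "rho_perm n (rho_letters w) = rs_perm n id w"
    unfolding rho_perm_def by (rule rs_perm_rho_letters[symmetric])
  also have "\<dots> = id" using rs_perm_eq_phiH[OF assms(1), of id] assms(2) by simp
  finally have "tvb_eq n (rho_word True (rho_letters w)) []"
    using letters by (intro rho_word_trivial_perm[of n n]) (auto simp: valid_rhos_def)
  note trivial = this
  have "tvb_eq n w (subst (rs_rewrite n id w) @ rho_word True (rho_letters w))"
    using rho_word_append_eq_subst[OF assms(1) valid_rhos_Nil] by (simp add: rho_perm_def)
  also have "tvb_eq n \<dots> (subst (rs_rewrite n id w) @ [] @ [])"
    by (rule pres_eq_rewrite[OF trivial]) simp
  finally have "tvb_eq n w (subst (rs_rewrite n id w))" by simp
  then show ?thesis using valid_rs_rewrite[OF range_perm_id] by (blast intro: pres_eq.sym)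
qed

lemma valid_tvb_append: "valid_tvb n (u @ v) = (valid_tvb n u \<and> valid_tvb n v)"
  by (auto simp: valid_tvb_def)

lemma valid_gen_img: "tvh_valid_gen n y \<Longrightarrow> valid_tvb n (gen_img b y)"
proof (cases y)
  case (X k l)
  moreover assume "tvh_valid_gen n y"
  ultimately show ?thesis
    by (auto elim!: tvh_valid_gen_X_cases simp: gen_img_X_less gen_img_X_greater valid_tvb_def
        rho_word_def tvb_valid_gen_def; linarith)
qed (auto simp: gen_img_def tvh_img_def inv_word_def valid_tvb_def tvb_valid_gen_def
    tvh_valid_gen_def)

lemma valid_subst: "valid_tvh n v \<Longrightarrow> valid_tvb n (subst v)"
proof (induction v)
  case (Cons a v)
  then show ?case
    by (cases a) (simp add: valid_tvh_Cons subst_Cons valid_tvb_append valid_gen_img)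
qed (simp add: valid_tvb_def)

lemma phiH_subst: "valid_tvh n v \<Longrightarrow> phiH (subst v) = id"
  using rs_perm_eq_phiH[OF valid_subst, of n v id] rs_perm_subst[of n v id] by simp

theorem mainTheorem9:
  fixes n :: nat
  assumes "n \<ge> 2"
  shows "(\<forall>v. valid_tvh n v \<longrightarrow> phiH (subst v) = id)
       \<and> (\<forall>w. valid_tvb n w \<and> phiH w = id \<longrightarrow>
             (\<exists>v. valid_tvh n v \<and> pres_eq (tvb_rels n) (subst v) w))
       \<and> (\<forall>v1 v2. valid_tvh n v1 \<and> valid_tvh n v2 \<longrightarrow>
             (pres_eq (tvb_rels n) (subst v1) (subst v2) \<longleftrightarrow> pres_eq (tvh_rels n) v1 v2))"
  \<comment> \<open>The argument works for every n.\<close>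
  using phiH_subst kernel_eq_subst subst_pres_eq_imp_tvh_pres_eq tvh_pres_eq_imp_subst_pres_eq
  by blast

end
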